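(* Let $G$ be a mean-payoff game with limited-observation and $\Gamma_G$ its associated reachability game. If Eve (respectively Adam) has a winning strategy in $\Gamma_G$, then Eve (respectively Adam) has a winning observation-based strategy with finite memory in $G$.
   Context: An MPG with limited-observation is a tuple $G=\langle Q,q_I,\Sigma,\Delta,w,Obs\rangle$: $Q$ finite set of states, $q_I\in Q$, $\Sigma$ finite set of actions, $\Delta\subseteq Q\times\Sigma\times Q$ total, $w:\Delta\to\mathbb{Z}$, $Obs$ a partition of $Q$, with $\{q_I\}\in Obs$ and, for each $o\in Obs,\sigma\in\Sigma$, $\mathrm{post}_\sigma(o)=\{q':\exists q\in o,(q,\sigma,q')\in\Delta\}$ a union of elements of $Obs$. Abstract paths $o_0\sigma_0o_1\ldots$ ($o_i\in Obs$, with some transition under $\sigma_i$ from $o_i$ to $o_{i+1}$), concrete paths $\gamma(\psi)$ (sequences $q_0\sigma_0q_1\ldots$ with $q_i\in o_i$, $(q_i,\sigma_i,q_{i+1})\in\Delta$), plays (infinite abstract paths starting at $\{q_I\}$), $\mathrm{Prefs}(G)$ (finite prefixes of plays ending in an observation), $\underline{MP}(\pi)=\liminf_n\frac1n\sum_{i<n}w(q_i,\sigma_i,q_{i+1})$. A play $\psi$ is winning for Eve if $\underline{MP}(\pi)\ge0$ for all $\pi\in\gamma(\psi)$, else for Adam. Observation-based strategies: for Eve $\lambda_\exists:\mathrm{Prefs}(G)\to\Sigma$; for Adam $\lambda_\forall:\mathrm{Prefs}(G)\times\Sigma\to Obs$ with $\lambda_\forall(o_0\ldots o_n,\sigma)\cap\mathrm{post}_\sigma(o_n)\ne\emptyset$;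 consistency as usual; winning if all consistent plays are winning. Eve's strategy has memory $m$ if there are $M$ with $|M|=m$, $m_0\in M$, $\alpha_u:M\times Obs\to M$, $\alpha_o:M\times Obs\to\Sigma$ with $\lambda_\exists(o_0\sigma_0\ldots o_n)=\alpha_o(m_n,o_n)$, $m_{i+1}=\alpha_u(m_i,o_i)$; Adam's has memory $m$ if there are $M$, $m_0$, $\alpha_u:M\times Obs\times\Sigma\to M$, $\alpha_o:M\times Obs\times\Sigma\to Obs$ with $\lambda_\forall(o_0\sigma_0\ldots o_n,\sigma_n)=\alpha_o(m_n,o_n,\sigma_n)$, $m_{i+1}=\alpha_u(m_i,o_i,\sigma_i)$. Finite memory means memory $m$ for some finite $m$. Reachability game $\Gamma_G$: let $\mathcal{F}$ be the set of functions $f:Q\to\mathbb{Z}\cup\{+\infty,\bot\}$, $\mathrm{supp}(f)=\{q:f(q)\ne\bot\}$. $f'$ is a $\sigma$-successor of $f$ if $\mathrm{supp}(f')\in Obs$, $\mathrm{supp}(f')\subseteq\mathrm{post}_\sigma(\mathrm{supp}(f))$, and for every $q\in\mathrm{supp}(f')$, $f'(q)$ equals either $\min\{f(q')+w(q',\sigma,q): q'\in\mathrm{supp}(f),(q',\sigma,q)\in\Delta\}$ or $+\infty$. For $k\in\mathbb{N}$, $f\preceq_k f'$ iff $\mathrm{supp}(f)=\mathrm{supp}(f')$ and $f(q)+k\le f'(q)$ for all $q\in\mathrm{supp}(f)$ (with $+\infty+k=+\infty$). Let $f_I(q_I)=0$ and $f_I(q)=\bot$ for $q\ne q_I$. $\Pi_G$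 is the set of sequences $f_0\sigma_0f_1\ldots\sigma_{n-1}f_n$ with $f_0=f_I$, each $f_{i+1}$ a $\sigma_i$-successor of $f_i$, and for all $0\le i<j<n$: $f_i\not\preceq_0 f_j$ and $f_j\not\preceq_1 f_i$. $\mathcal{T}_\exists$ is the set of such sequences with $f_i\preceq_0 f_n$ for some $i<n$; $\mathcal{T}_\forall$ is the set of such sequences with, for some $i<n$, $f_n\preceq_1 f_i$ and $f_i(q)\ne+\infty$ for some $q\in\mathrm{supp}(f_i)$. $\Gamma_G$ is played from the sequence $f_I$: at the current sequence $x$, Eve chooses $\sigma\in\Sigma$ and Adam chooses $f$ with $x\sigma f\in\Pi_G$; the game stops when the current sequence lies in $\mathcal{T}_\exists$ (Eve wins) or in $\mathcal{T}_\forall$ (Adam wins). A strategy in $\Gamma_G$ (a function from histories to actions for Eve, to successor sequences for Adam) is winning for Eve (Adam) if every play consistent with it reaches $\mathcal{T}_\exists$ ($\mathcal{T}_\forall$). *)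

theory Defs
  imports Complex_Main "HOL-Library.Extended_Real"
begin

record ('q, 'a) mpg =
  states :: "'q set"
  init   :: "'q"
  acts   :: "'a set"
  trans  :: "('q \<times> 'a \<times> 'q) set"
  weight :: "'q \<Rightarrow> 'a \<Rightarrow> 'q \<Rightarrow> int"
  obs    :: "'q set set"

definition post :: "('q, 'a) mpg \<Rightarrow> 'a \<Rightarrow> 'q set \<Rightarrow> 'q set" where
  "post G \<sigma> S = {q'. \<exists>q\<in>S. (q, \<sigma>, q') \<in> trans G}"

definition mpg_lo :: "('q, 'a) mpg \<Rightarrow> bool" where
  "mpg_lo G \<longleftrightarrow>
     finite (states G) \<and> init G \<in> states G \<and> finite (acts G) \<and> acts G \<noteq> {} \<and>
     trans G \<subseteq> states G \<times> acts G \<times> states G \<and>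
     (\<forall>q\<in>states G. \<forall>\<sigma>\<in>acts G. \<exists>q'. (q, \<sigma>, q') \<in> trans G) \<and>
     (\<forall>ob\<in>obs G. ob \<noteq> {} \<and> ob \<subseteq> states G) \<and> \<Union>(obs G) = states G \<and>
     (\<forall>o1\<in>obs G. \<forall>o2\<in>obs G. o1 \<noteq> o2 \<longrightarrow> o1 \<inter> o2 = {}) \<and>
     {init G} \<in> obs G \<and>
     (\<forall>ob\<in>obs G. \<forall>\<sigma>\<in>acts G. \<exists>S\<subseteq>obs G. post G \<sigma> ob = \<Union>S)"

definition is_play :: "('q, 'a) mpg \<Rightarrow> (nat \<Rightarrow> 'q set) \<Rightarrow> (nat \<Rightarrow> 'a) \<Rightarrow> bool" where
  "is_play G os as \<longleftrightarrow> os 0 = {init G} \<and>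
     (\<forall>i. os i \<in> obs G \<and> as i \<in> acts G \<and>
          (\<exists>q\<in>os i. \<exists>q'\<in>os (Suc i). (q, as i, q') \<in> trans G))"

definition is_concrete :: "('q, 'a) mpg \<Rightarrow> (nat \<Rightarrow> 'q set) \<Rightarrow> (nat \<Rightarrow> 'a) \<Rightarrow> (nat \<Rightarrow> 'q) \<Rightarrow> bool" where
  "is_concrete G os as qs \<longleftrightarrow> (\<forall>i. qs i \<in> os i \<and> (qs i, as i, qs (Suc i)) \<in> trans G)"

definition mp_inf :: "('q, 'a) mpg \<Rightarrow> (nat \<Rightarrow> 'a) \<Rightarrow> (nat \<Rightarrow> 'q) \<Rightarrow> ereal" where
  "mp_inf G as qs = Liminf sequentially
     (\<lambda>n. ereal ((\<Sum>i<n. real_of_int (weight G (qs i) (as i) (qs (Suc i)))) / real n))"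

definition eve_wins_play :: "('q, 'a) mpg \<Rightarrow> (nat \<Rightarrow> 'q set) \<Rightarrow> (nat \<Rightarrow> 'a) \<Rightarrow> bool" where
  "eve_wins_play G os as \<longleftrightarrow> (\<forall>qs. is_concrete G os as qs \<longrightarrow> mp_inf G as qs \<ge> 0)"

text \<open>Prefs(G): a prefix o_0 sigma_0 ... o_n is a pair (list of n+1 observations,
  list of n actions) which is the prefix of some play.\<close>
definition is_pref :: "('q, 'a) mpg \<Rightarrow> 'q set list \<Rightarrow> 'a list \<Rightarrow> bool" where
  "is_pref G ol al \<longleftrightarrow> (\<exists>os as. is_play G os as \<and>
     ol = map os [0..<Suc (length al)] \<and> al = map as [0..<length al])"

definition eve_obs_strat :: "('q, 'a) mpg \<Rightarrow> ('q set list \<Rightarrow> 'a list \<Rightarrow> 'a) \<Rightarrow> bool" where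
  "eve_obs_strat G str \<longleftrightarrow> (\<forall>ol al. is_pref G ol al \<longrightarrow> str ol al \<in> acts G)"

definition eve_cons_play :: "('q set list \<Rightarrow> 'a list \<Rightarrow> 'a) \<Rightarrow> (nat \<Rightarrow> 'q set) \<Rightarrow> (nat \<Rightarrow> 'a) \<Rightarrow> bool" where
  "eve_cons_play str os as \<longleftrightarrow> (\<forall>n. as n = str (map os [0..<Suc n]) (map as [0..<n]))"

definition eve_winning_obs :: "('q, 'a) mpg \<Rightarrow> ('q set list \<Rightarrow> 'a list \<Rightarrow> 'a) \<Rightarrow> bool" where
  "eve_winning_obs G str \<longleftrightarrow> eve_obs_strat G str \<and>
     (\<forall>os as. is_play G os as \<and> eve_cons_play str os as \<longrightarrow> eve_wins_play G os as)"

text \<open>Finite memory; memory states are encoded as natural numbers (M a finite set of nats).\<close>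
definition eve_finite_mem :: "('q, 'a) mpg \<Rightarrow> ('q set list \<Rightarrow> 'a list \<Rightarrow> 'a) \<Rightarrow> bool" where
  "eve_finite_mem G str \<longleftrightarrow>
     (\<exists>(M :: nat set) m0 (\<alpha>u :: nat \<Rightarrow> 'q set \<Rightarrow> nat) (\<alpha>o :: nat \<Rightarrow> 'q set \<Rightarrow> 'a).
        finite M \<and> m0 \<in> M \<and>
        (\<forall>m\<in>M. \<forall>ob\<in>obs G. \<alpha>u m ob \<in> M \<and> \<alpha>o m ob \<in> acts G) \<and>
        (\<forall>ol al. is_pref G ol al \<longrightarrow> str ol al = \<alpha>o (foldl \<alpha>u m0 (butlast ol)) (last ol)))"

definition adam_obs_strat :: "('q, 'a) mpg \<Rightarrow> ('q set list \<Rightarrow> 'a list \<Rightarrow> 'a \<Rightarrow> 'q set) \<Rightarrow> bool" where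
  "adam_obs_strat G str \<longleftrightarrow> (\<forall>ol al \<sigma>. is_pref G ol al \<and> \<sigma> \<in> acts G \<longrightarrow>
     str ol al \<sigma> \<in> obs G \<and> str ol al \<sigma> \<inter> post G \<sigma> (last ol) \<noteq> {})"

definition adam_cons_play :: "('q set list \<Rightarrow> 'a list \<Rightarrow> 'a \<Rightarrow> 'q set) \<Rightarrow> (nat \<Rightarrow> 'q set) \<Rightarrow> (nat \<Rightarrow> 'a) \<Rightarrow> bool" where
  "adam_cons_play str os as \<longleftrightarrow>
     (\<forall>n. os (Suc n) = str (map os [0..<Suc n]) (map as [0..<n]) (as n))"

definition adam_winning_obs :: "('q, 'a) mpg \<Rightarrow> ('q set list \<Rightarrow> 'a list \<Rightarrow> 'a \<Rightarrow> 'q set) \<Rightarrow> bool" where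
  "adam_winning_obs G str \<longleftrightarrow> adam_obs_strat G str \<and>
     (\<forall>os as. is_play G os as \<and> adam_cons_play str os as \<longrightarrow> \<not> eve_wins_play G os as)"

definition adam_finite_mem :: "('q, 'a) mpg \<Rightarrow> ('q set list \<Rightarrow> 'a list \<Rightarrow> 'a \<Rightarrow> 'q set) \<Rightarrow> bool" where
  "adam_finite_mem G str \<longleftrightarrow>
     (\<exists>(M :: nat set) m0 (\<alpha>u :: nat \<Rightarrow> 'q set \<Rightarrow> 'a \<Rightarrow> nat) (\<alpha>o :: nat \<Rightarrow> 'q set \<Rightarrow> 'a \<Rightarrow> 'q set).
        finite M \<and> m0 \<in> M \<and>
        (\<forall>m\<in>M. \<forall>ob\<in>obs G. \<forall>\<sigma>\<in>acts G. \<alpha>u m ob \<sigma> \<in> M \<and> \<alpha>o m ob \<sigma> \<in> obs G) \<and>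
        (\<forall>ol al \<sigma>. is_pref G ol al \<and> \<sigma> \<in> acts G \<longrightarrow>
           str ol al \<sigma> = \<alpha>o (foldl (\<lambda>m (ob, \<sigma>'). \<alpha>u m ob \<sigma>') m0 (zip (butlast ol) al)) (last ol) \<sigma>))"

datatype val = Fin int | PInf | Bot

fun vadd :: "val \<Rightarrow> int \<Rightarrow> val" where
  "vadd (Fin a) k = Fin (a + k)"
| "vadd PInf k = PInf"
| "vadd Bot k = Bot"

fun vle :: "val \<Rightarrow> val \<Rightarrow> bool" where
  "vle (Fin a) (Fin b) = (a \<le> b)"
| "vle _ PInf = True"
| "vle _ _ = False"

definition vmin :: "val set \<Rightarrow> val" where
  "vmin S = (if \<exists>k. Fin k \<in> S then Fin (Min {k. Fin k \<in> S}) else PInf)"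

definition supp :: "('q \<Rightarrow> val) \<Rightarrow> 'q set" where
  "supp f = {q. f q \<noteq> Bot}"

definition fsucc :: "('q, 'a) mpg \<Rightarrow> ('q \<Rightarrow> val) \<Rightarrow> 'a \<Rightarrow> ('q \<Rightarrow> val) \<Rightarrow> bool" where
  "fsucc G f \<sigma> f' \<longleftrightarrow> supp f' \<in> obs G \<and> supp f' \<subseteq> post G \<sigma> (supp f) \<and>
     (\<forall>q\<in>supp f'.
        f' q = vmin {vadd (f q') (weight G q' \<sigma> q) | q'. q' \<in> supp f \<and> (q', \<sigma>, q) \<in> trans G}
        \<or> f' q = PInf)"

definition fprec :: "nat \<Rightarrow> ('q \<Rightarrow> val) \<Rightarrow> ('q \<Rightarrow> val) \<Rightarrow> bool" where
  "fprec k f f' \<longleftrightarrow> supp f = supp f' \<and> (\<forall>q\<in>supp f. vle (vadd (f q) (int k)) (f' q))"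

definition fI :: "('q, 'a) mpg \<Rightarrow> 'q \<Rightarrow> val" where
  "fI G = (\<lambda>q. if q = init G then Fin 0 else Bot)"

text \<open>A sequence f_0 sigma_0 f_1 ... sigma_{n-1} f_n is a pair (fs, ss) with
  length fs = n+1 and length ss = n.\<close>
definition in_Pi :: "('q, 'a) mpg \<Rightarrow> ('q \<Rightarrow> val) list \<Rightarrow> 'a list \<Rightarrow> bool" where
  "in_Pi G fs ss \<longleftrightarrow> length fs = Suc (length ss) \<and> fs ! 0 = fI G \<and>
     (\<forall>i<length ss. fsucc G (fs ! i) (ss ! i) (fs ! Suc i)) \<and>
     (\<forall>i j. i < j \<and> j < length ss \<longrightarrow>
        \<not> fprec 0 (fs ! i) (fs ! j) \<and> \<not> fprec 1 (fs ! j) (fs ! i))"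

definition T_E :: "('q, 'a) mpg \<Rightarrow> ('q \<Rightarrow> val) list \<Rightarrow> 'a list \<Rightarrow> bool" where
  "T_E G fs ss \<longleftrightarrow> in_Pi G fs ss \<and>
     (\<exists>i<length ss. fprec 0 (fs ! i) (fs ! length ss))"

definition T_A :: "('q, 'a) mpg \<Rightarrow> ('q \<Rightarrow> val) list \<Rightarrow> 'a list \<Rightarrow> bool" where
  "T_A G fs ss \<longleftrightarrow> in_Pi G fs ss \<and>
     (\<exists>i<length ss. fprec 1 (fs ! length ss) (fs ! i) \<and> (\<exists>q\<in>supp (fs ! i). (fs ! i) q \<noteq> PInf))"

definition gam_hist :: "('q, 'a) mpg \<Rightarrow> ('q \<Rightarrow> val) list \<Rightarrow> 'a list \<Rightarrow> bool" where
  "gam_hist G fs ss \<longleftrightarrow> in_Pi G fs ss \<and> set ss \<subseteq> acts G \<and>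
     (\<forall>k<length ss. \<not> T_E G (take (Suc k) fs) (take k ss) \<and> \<not> T_A G (take (Suc k) fs) (take k ss))"

definition gam_eve_cons :: "(('q \<Rightarrow> val) list \<Rightarrow> 'a list \<Rightarrow> 'a) \<Rightarrow> ('q \<Rightarrow> val) list \<Rightarrow> 'a list \<Rightarrow> bool" where
  "gam_eve_cons s fs ss \<longleftrightarrow> (\<forall>k<length ss. ss ! k = s (take (Suc k) fs) (take k ss))"

definition gam_adam_cons :: "(('q \<Rightarrow> val) list \<Rightarrow> 'a list \<Rightarrow> 'a \<Rightarrow> ('q \<Rightarrow> val)) \<Rightarrow> ('q \<Rightarrow> val) list \<Rightarrow> 'a list \<Rightarrow> bool" where
  "gam_adam_cons s fs ss \<longleftrightarrow> (\<forall>k<length ss. fs ! Suc k = s (take (Suc k) fs) (take k ss) (ss ! k))"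

text \<open>Eve's strategy is winning in Gamma_G iff every play consistent with it reaches T_E:
  every consistent history that stops lies in T_E (not T_A), at every non-stopped consistent
  history Eve's choice is a legal action admitting a continuation, and there is no infinite
  consistent play that never stops.\<close>
definition gamma_eve_winning :: "('q, 'a) mpg \<Rightarrow> (('q \<Rightarrow> val) list \<Rightarrow> 'a list \<Rightarrow> 'a) \<Rightarrow> bool" where
  "gamma_eve_winning G s \<longleftrightarrow>
     (\<forall>fs ss. gam_hist G fs ss \<and> gam_eve_cons s fs ss \<longrightarrow>
        \<not> T_A G fs ss \<and>
        (\<not> T_E G fs ss \<longrightarrow> s fs ss \<in> acts G \<and> (\<exists>f. in_Pi G (fs @ [f]) (ss @ [s fs ss])))) \<and>
     \<not> (\<exists>F S. \<forall>n. gam_hist G (map F [0..<Suc n]) (map S [0..<n]) \<and>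
                  gam_eve_cons s (map F [0..<Suc n]) (map S [0..<n]))"

definition gamma_adam_winning :: "('q, 'a) mpg \<Rightarrow> (('q \<Rightarrow> val) list \<Rightarrow> 'a list \<Rightarrow> 'a \<Rightarrow> ('q \<Rightarrow> val)) \<Rightarrow> bool" where
  "gamma_adam_winning G s \<longleftrightarrow>
     (\<forall>fs ss. gam_hist G fs ss \<and> gam_adam_cons s fs ss \<longrightarrow>
        \<not> T_E G fs ss \<and>
        (\<not> T_A G fs ss \<longrightarrow> (\<forall>\<sigma>\<in>acts G. in_Pi G (fs @ [s fs ss \<sigma>]) (ss @ [\<sigma>])))) \<and>
     \<not> (\<exists>F S. \<forall>n. gam_hist G (map F [0..<Suc n]) (map S [0..<n]) \<and>
                  gam_adam_cons s (map F [0..<Suc n]) (map S [0..<n]))"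

end

theory Submission
  imports Defs "HOL-Library.FuncSet"
begin

text \<open>Both strategies play the winning strategy of $\Gamma_G$ along the current play and,
  whenever $\Gamma_G$ would stop, cut its history back to the node that closes the cycle. A
  winning strategy of the finitely branching game $\Gamma_G$ admits only finitely many consistent
  histories (Koenig's lemma), so these cut-back histories form a finite memory.

  For Eve, a cut only lowers the stored function, which therefore stays below the weight of
  every concrete path prefix ending in the current state. The stored values range over a finite
  set, so all prefix sums of concrete paths are bounded below and mean payoffs are nonnegative.

  For Adam, a cut raises the stored function by at least $1$ on its support. Following
  minimising predecessors backwards and applying Koenig's lemma yields a concrete path whose
  prefix sum plus number of cuts stays bounded, while the number of cuts grows linearly because
  stored histories have bounded length; so its mean payoff is negative.\<close>

lemma vadd_0 [simp]: "vadd x 0 = x"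
  by (cases x) auto

lemma vle_refl: "x \<noteq> Bot \<Longrightarrow> vle x x"
  by (cases x) auto

lemma vle_trans: "vle a b \<Longrightarrow> vle b c \<Longrightarrow> vle a c"
  by (cases a; cases b; cases c) auto

lemma vle_Fin_iff: "vle x (Fin b) \<longleftrightarrow> (\<exists>a. x = Fin a \<and> a \<le> b)"
  by (cases x) auto

lemma vle_vadd_mono: "vle x y \<Longrightarrow> vle (vadd x k) (vadd y k)"
  by (cases x; cases y) auto

lemma vmin_not_Bot [simp]: "vmin S \<noteq> Bot"
  by (simp add: vmin_def)

lemma finite_Fin_vimage: "finite S \<Longrightarrow> finite {k. Fin k \<in> S}"
  using finite_vimageI[of S Fin] by (simp add: vimage_def inj_def)

lemma vmin_le:
  assumes "finite S" "x \<in> S" "vle x y"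
  shows "vle (vmin S) y"
proof (cases y)
  case (Fin b)
  then obtain a where a: "x = Fin a" "a \<le> b"
    using assms(3) vle_Fin_iff by blast
  then have "Min {k. Fin k \<in> S} \<le> a"
    using finite_Fin_vimage[OF assms(1)] assms(2) by (auto intro: Min_le)
  then show ?thesis
    using a Fin assms(2) by (auto simp: vmin_def)
next
  case Bot
  then show ?thesis using assms(3) by (cases x) auto
qed simp

lemma vmin_Fin_mem:
  assumes "finite S" "vmin S = Fin b"
  shows "Fin b \<in> S"
proof -
  have ex: "\<exists>k. Fin k \<in> S" and b: "b = Min {k. Fin k \<in> S}"
    using assms(2) by (auto simp: vmin_def split: if_splits)
  have "Min {k. Fin k \<in> S} \<in> {k. Fin k \<in> S}"
    using finite_Fin_vimage[OF assms(1)] ex by (intro Min_in) auto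
  then show ?thesis using b by simp
qed

definition the_Fin :: "val \<Rightarrow> int" where
  "the_Fin v = (case v of Fin k \<Rightarrow> k | _ \<Rightarrow> 0)"

lemma the_Fin_Fin [simp]: "the_Fin (Fin k) = k"
  by (simp add: the_Fin_def)

section \<open>Koenig's lemma\<close>

lemma prefix_closed_append:
  assumes pc: "\<And>xs x. xs @ [x] \<in> T \<Longrightarrow> xs \<in> T" and "xs @ ys \<in> T"
  shows "xs \<in> T"
  using assms(2)
proof (induction ys rule: rev_induct)
  case (snoc y ys)
  then show ?case using pc by (metis append_assoc)
qed simp

definition extensions :: "'x list set \<Rightarrow> 'x list \<Rightarrow> 'x list set" where
  "extensions T xs = {ys \<in> T. \<exists>zs. ys = xs @ zs}"

lemma koenig_step:
  assumes pc: "\<And>xs x. xs @ [x] \<in> T \<Longrightarrow> xs \<in> T"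
    and fb: "finite {x. xs @ [x] \<in> T}"
    and inf: "infinite (extensions T xs)"
  obtains x where "xs @ [x] \<in> T" "infinite (extensions T (xs @ [x]))"
proof -
  have "extensions T xs \<subseteq> insert xs (\<Union>x\<in>{x. xs @ [x] \<in> T}. extensions T (xs @ [x]))"
  proof
    fix ys assume "ys \<in> extensions T xs"
    then obtain zs where ys: "ys \<in> T" "ys = xs @ zs"
      by (auto simp: extensions_def)
    show "ys \<in> insert xs (\<Union>x\<in>{x. xs @ [x] \<in> T}. extensions T (xs @ [x]))"
    proof (cases zs)
      case (Cons z zs')
      then have "(xs @ [z]) @ zs' \<in> T"
        using ys by simp
      then have "xs @ [z] \<in> T"
        by (rule prefix_closed_append[rotated]) (rule pc)
      then show ?thesis
        using ys Cons by (auto simp: extensions_def)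
    qed (use ys in simp)
  qed
  then have "\<not> finite (\<Union>x\<in>{x. xs @ [x] \<in> T}. extensions T (xs @ [x]))"
    using inf finite_subset by auto
  then show ?thesis
    using fb that by blast
qed

primrec koenig_path :: "'x list set \<Rightarrow> nat \<Rightarrow> 'x list" where
  "koenig_path T 0 = []"
| "koenig_path T (Suc n) = koenig_path T n @
     [SOME x. koenig_path T n @ [x] \<in> T \<and> infinite (extensions T (koenig_path T n @ [x]))]"

lemma koenig_path:
  assumes pc: "\<And>xs x. xs @ [x] \<in> T \<Longrightarrow> xs \<in> T"
    and fb: "\<And>xs. finite {x. xs @ [x] \<in> T}" and inf: "infinite T"
  shows "infinite (extensions T (koenig_path T n))"
proof (induction n)
  case 0
  have "extensions T [] = T"
    by (auto simp: extensions_def)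
  then show ?case
    using inf by simp
next
  case (Suc n)
  with pc fb obtain x where "koenig_path T n @ [x] \<in> T"
    "infinite (extensions T (koenig_path T n @ [x]))"
    by (rule koenig_step)
  then have "\<exists>x. koenig_path T n @ [x] \<in> T \<and> infinite (extensions T (koenig_path T n @ [x]))"
    by blast
  then show ?case
    unfolding koenig_path.simps by (rule someI2_ex) blast
qed

lemma koenig:
  fixes T :: "'x list set"
  assumes pc: "\<And>xs x. xs @ [x] \<in> T \<Longrightarrow> xs \<in> T"
    and fb: "\<And>xs. finite {x. xs @ [x] \<in> T}" and inf: "infinite T"
  shows "\<exists>g. \<forall>n. map g [0..<n] \<in> T"
proof
  define g where "g n = last (koenig_path T (Suc n))" for n
  have map_g: "map g [0..<n] = koenig_path T n" for n
    by (induction n) (simp_all add: g_def)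
  have "koenig_path T n \<in> T" for n
  proof -
    have "extensions T (koenig_path T n) \<noteq> {}"
      using koenig_path[OF pc fb inf, where n = n] by auto
    then obtain zs where "koenig_path T n @ zs \<in> T"
      by (auto simp: extensions_def)
    then show ?thesis
      by (rule prefix_closed_append[rotated]) (rule pc)
  qed
  then show "\<forall>n. map g [0..<n] \<in> T"
    by (simp add: map_g)
qed

text \<open>A history $f_0 \sigma_0 f_1 \ldots \sigma_{n-1} f_n$ with fixed $f_0$ is the list of
  pairs $(\sigma_i, f_{i+1})$.\<close>

definition hist_of_pairs :: "'f \<Rightarrow> ('s \<times> 'f) list \<Rightarrow> 'f list \<times> 's list" where
  "hist_of_pairs f0 xs = (f0 # map snd xs, map fst xs)"

lemma histories_subset_hist_of_pairs:
  assumes shape: "\<And>fs ss. (fs, ss) \<in> H \<Longrightarrow> length fs = Suc (length ss) \<and> fs ! 0 = f0"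
  shows "H \<subseteq> hist_of_pairs f0 ` {xs. hist_of_pairs f0 xs \<in> H}"
proof
  fix h assume h: "h \<in> H"
  obtain fs ss where h_eq: "h = (fs, ss)"
    by (cases h)
  have "length fs = Suc (length ss)" "fs ! 0 = f0"
    using shape[of fs ss] h h_eq by simp_all
  then have "fs = f0 # tl fs" "length (tl fs) = length ss"
    by (cases fs, simp_all)+
  then have "hist_of_pairs f0 (zip ss (tl fs)) = h"
    using h_eq by (simp add: hist_of_pairs_def)
  moreover have "zip ss (tl fs) \<in> {xs. hist_of_pairs f0 xs \<in> H}"
    using h calculation by simp
  ultimately show "h \<in> hist_of_pairs f0 ` {xs. hist_of_pairs f0 xs \<in> H}"
    by (rule image_eqI[OF sym])
qed

lemma finite_histories:
  fixes H :: "('f list \<times> 's list) set"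
  assumes shape: "\<And>fs ss. (fs, ss) \<in> H \<Longrightarrow> length fs = Suc (length ss) \<and> fs ! 0 = f0"
    and take: "\<And>fs ss k. (fs, ss) \<in> H \<Longrightarrow> k \<le> length ss \<Longrightarrow> (take (Suc k) fs, take k ss) \<in> H"
    and branch: "\<And>fs ss. (fs, ss) \<in> H \<Longrightarrow> finite {(\<sigma>, f). (fs @ [f], ss @ [\<sigma>]) \<in> H}"
    and no_branch: "\<not> (\<exists>F S. \<forall>n. (map F [0..<Suc n], map S [0..<n]) \<in> H)"
  shows "finite H"
proof (rule ccontr)
  assume "infinite H"
  define T where "T = {xs. hist_of_pairs f0 xs \<in> H}"
  have "H \<subseteq> hist_of_pairs f0 ` T"
    unfolding T_def by (rule histories_subset_hist_of_pairs[OF shape])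
  then have infT: "infinite T"
    using \<open>infinite H\<close> finite_surj by blast
  have pcT: "xs \<in> T" if "xs @ [x] \<in> T" for xs x
    using that take[of "f0 # map snd (xs @ [x])" "map fst (xs @ [x])" "length xs"]
    by (simp add: T_def hist_of_pairs_def)
  have fbT: "finite {x. xs @ [x] \<in> T}" for xs
  proof (cases "xs \<in> T")
    case True
    have "{x. xs @ [x] \<in> T} =
        {(\<sigma>, f). (fst (hist_of_pairs f0 xs) @ [f], snd (hist_of_pairs f0 xs) @ [\<sigma>]) \<in> H}"
      by (auto simp: T_def hist_of_pairs_def)
    then show ?thesis
      using branch[of "fst (hist_of_pairs f0 xs)" "snd (hist_of_pairs f0 xs)"] True by (simp add: T_def)
  next
    case False
    then have "{x. xs @ [x] \<in> T} = {}"
      using pcT by blast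
    then show ?thesis by (simp only: finite.emptyI)
  qed
  have "\<exists>g. \<forall>n. map g [0..<n] \<in> T"
    by (rule koenig) (fact pcT fbT infT)+
  then obtain g where g: "\<forall>n. map g [0..<n] \<in> T"
    by blast
  define F where "F n = (if n = 0 then f0 else snd (g (n - 1)))" for n
  have "map F [0..<Suc n] = f0 # map snd (map g [0..<n])" for n
    by (simp add: F_def map_upt_Suc del: upt_Suc)
  then have "(map F [0..<Suc n], map (\<lambda>n. fst (g n)) [0..<n]) \<in> H" for n
    using g by (simp add: T_def hist_of_pairs_def comp_def del: upt_Suc)
  then show False
    using no_branch by blast
qed

section \<open>Arenas with limited observation\<close>

lemma mpg_loD:
  assumes "mpg_lo G"
  shows mpg_lo_finite_states: "finite (states G)"
    and mpg_lo_finite_acts: "finite (acts G)"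
    and mpg_lo_trans: "trans G \<subseteq> states G \<times> acts G \<times> states G"
    and mpg_lo_total: "\<And>q \<sigma>. q \<in> states G \<Longrightarrow> \<sigma> \<in> acts G \<Longrightarrow> \<exists>q'. (q, \<sigma>, q') \<in> trans G"
    and mpg_lo_obs: "\<And>ob. ob \<in> obs G \<Longrightarrow> ob \<noteq> {} \<and> ob \<subseteq> states G"
    and mpg_lo_obs_disjoint: "\<And>o1 o2. o1 \<in> obs G \<Longrightarrow> o2 \<in> obs G \<Longrightarrow> o1 \<noteq> o2 \<Longrightarrow> o1 \<inter> o2 = {}"
    and mpg_lo_post: "\<And>ob \<sigma>. ob \<in> obs G \<Longrightarrow> \<sigma> \<in> acts G \<Longrightarrow> \<exists>S\<subseteq>obs G. post G \<sigma> ob = \<Union>S"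
  using assms unfolding mpg_lo_def by simp_all

lemma obs_eqI:
  assumes "mpg_lo G" "o1 \<in> obs G" "o2 \<in> obs G" "q \<in> o1" "q \<in> o2"
  shows "o1 = o2"
  using mpg_lo_obs_disjoint[OF assms(1-3)] assms(4,5) by blast

lemma post_obs_cover:
  assumes "mpg_lo G" "ob \<in> obs G" "\<sigma> \<in> acts G" "q \<in> post G \<sigma> ob"
  obtains o' where "o' \<in> obs G" "q \<in> o'" "o' \<subseteq> post G \<sigma> ob"
proof -
  obtain S where S: "S \<subseteq> obs G" "post G \<sigma> ob = \<Union>S"
    using mpg_lo_post[OF assms(1-3)] by blast
  then obtain o' where "o' \<in> S" "q \<in> o'"
    using assms(4) by auto
  then show ?thesis
    using that S by blast
qed

lemma play_obs_subset_post:
  assumes lo: "mpg_lo G" and p: "is_play G os as"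
  shows "os (Suc i) \<subseteq> post G (as i) (os i)"
proof -
  have o: "os i \<in> obs G" "os (Suc i) \<in> obs G" "as i \<in> acts G"
    using p unfolding is_play_def by auto
  obtain q q' where q: "q \<in> os i" "q' \<in> os (Suc i)" "(q, as i, q') \<in> trans G"
    using p unfolding is_play_def by blast
  then have "q' \<in> post G (as i) (os i)"
    unfolding post_def by blast
  then obtain o' where "o' \<in> obs G" "q' \<in> o'" "o' \<subseteq> post G (as i) (os i)"
    by (rule post_obs_cover[OF lo o(1,3)])
  moreover have "o' = os (Suc i)"
    by (rule obs_eqI[OF lo calculation(1) o(2) calculation(2) q(2)])
  ultimately show ?thesis
    by simp
qed

lemma obs_meets_post:
  assumes lo: "mpg_lo G" and "ob \<in> obs G" "\<sigma> \<in> acts G"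
  shows "\<exists>o'\<in>obs G. o' \<inter> post G \<sigma> ob \<noteq> {}"
proof -
  obtain q where q: "q \<in> ob" "q \<in> states G"
    using mpg_lo_obs[OF lo assms(2)] by blast
  then obtain q' where "(q, \<sigma>, q') \<in> trans G"
    using mpg_lo_total[OF lo _ assms(3)] by blast
  then have "q' \<in> post G \<sigma> ob"
    using q unfolding post_def by blast
  then obtain o' where "o' \<in> obs G" "q' \<in> o'" "o' \<subseteq> post G \<sigma> ob"
    by (rule post_obs_cover[OF lo assms(2,3)])
  then show ?thesis
    by blast
qed

lemma concrete_in_states:
  assumes "mpg_lo G" "is_play G os as" "is_concrete G os as qs"
  shows "qs n \<in> states G"
proof -
  have "qs n \<in> os n"
    using assms(3) unfolding is_concrete_def by blast
  moreover have "os n \<in> obs G"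
    using assms(2) unfolding is_play_def by blast
  ultimately show ?thesis
    using mpg_lo_obs[OF assms(1)] by blast
qed

lemma is_prefD:
  assumes "is_pref G ol al"
  shows "set ol \<subseteq> obs G" "set al \<subseteq> acts G" "length ol = Suc (length al)"
proof -
  obtain os as n where p: "is_play G os as" "ol = map os [0..<Suc n]" "al = map as [0..<n]"
    using assms unfolding is_pref_def by blast
  have "os i \<in> obs G" "as i \<in> acts G" for i
    using p(1) unfolding is_play_def by simp_all
  then show "set ol \<subseteq> obs G" "set al \<subseteq> acts G" "length ol = Suc (length al)"
    using p(2,3) by (auto simp del: upt_Suc)
qed

definition pred_vals :: "('q, 'a) mpg \<Rightarrow> ('q \<Rightarrow> val) \<Rightarrow> 'a \<Rightarrow> 'q \<Rightarrow> val set" where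
  "pred_vals G f \<sigma> q = {vadd (f q') (weight G q' \<sigma> q) | q'. q' \<in> supp f \<and> (q', \<sigma>, q) \<in> trans G}"

lemma fsucc_iff:
  "fsucc G f \<sigma> f' \<longleftrightarrow> supp f' \<in> obs G \<and> supp f' \<subseteq> post G \<sigma> (supp f) \<and>
     (\<forall>q\<in>supp f'. f' q = vmin (pred_vals G f \<sigma> q) \<or> f' q = PInf)"
  unfolding fsucc_def pred_vals_def ..

lemma finite_pred_vals:
  assumes "mpg_lo G"
  shows "finite (pred_vals G f \<sigma> q)"
proof -
  have "pred_vals G f \<sigma> q \<subseteq> (\<lambda>q'. vadd (f q') (weight G q' \<sigma> q)) ` states G"
    using mpg_lo_trans[OF assms] unfolding pred_vals_def by blast
  then show ?thesis
    using mpg_lo_finite_states[OF assms] finite_subset by blast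
qed

text \<open>The least $\sigma$-successor of $f$ with support \<open>ob\<close>, i.e.\ the one that never
  chooses $+\infty$.\<close>

definition min_succ :: "('q, 'a) mpg \<Rightarrow> ('q \<Rightarrow> val) \<Rightarrow> 'a \<Rightarrow> 'q set \<Rightarrow> 'q \<Rightarrow> val" where
  "min_succ G f \<sigma> ob = (\<lambda>q. if q \<in> ob then vmin (pred_vals G f \<sigma> q) else Bot)"

lemma supp_min_succ [simp]: "supp (min_succ G f \<sigma> ob) = ob"
  unfolding supp_def min_succ_def by auto

lemma fsucc_min_succ:
  assumes "ob \<in> obs G" "ob \<subseteq> post G \<sigma> (supp f)"
  shows "fsucc G f \<sigma> (min_succ G f \<sigma> ob)"
  unfolding fsucc_iff supp_min_succ using assms by (simp add: min_succ_def)

lemma min_succ_le: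
  assumes "mpg_lo G" "q \<in> ob" "q' \<in> supp f" "(q', \<sigma>, q) \<in> trans G"
  shows "vle (min_succ G f \<sigma> ob q) (vadd (f q') (weight G q' \<sigma> q))"
proof -
  have "vadd (f q') (weight G q' \<sigma> q) \<in> pred_vals G f \<sigma> q"
    using assms(3,4) unfolding pred_vals_def by blast
  moreover have "vadd (f q') (weight G q' \<sigma> q) \<noteq> Bot"
    using assms(3) by (cases "f q'") (auto simp: supp_def)
  ultimately show ?thesis
    using vmin_le[OF finite_pred_vals[OF assms(1)]] vle_refl assms(2)
    by (simp add: min_succ_def)
qed

lemma fsucc_supp: "fsucc G f \<sigma> f' \<Longrightarrow> supp f' \<in> obs G \<and> supp f' \<subseteq> post G \<sigma> (supp f)"
  unfolding fsucc_def by blast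

lemma fsucc_Fin_pred:
  assumes "mpg_lo G" "fsucc G f \<sigma> f'" "f' q = Fin c"
  obtains q' where "q' \<in> supp f" "(q', \<sigma>, q) \<in> trans G" "vadd (f q') (weight G q' \<sigma> q) = Fin c"
proof -
  have "q \<in> supp f'"
    using assms(3) by (simp add: supp_def)
  then have "vmin (pred_vals G f \<sigma> q) = Fin c"
    using assms(2,3) unfolding fsucc_iff by auto
  then have "Fin c \<in> pred_vals G f \<sigma> q"
    using vmin_Fin_mem[OF finite_pred_vals[OF assms(1)]] by blast
  then obtain q' where "q' \<in> supp f" "(q', \<sigma>, q) \<in> trans G"
    "Fin c = vadd (f q') (weight G q' \<sigma> q)"
    unfolding pred_vals_def by blast
  then show ?thesis
    using that by simp
qed

lemma finite_fsucc:
  assumes lo: "mpg_lo G"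
  shows "finite {f'. fsucc G f \<sigma> f'}"
proof -
  define A where "A q = {Bot, PInf, vmin (pred_vals G f \<sigma> q)}" for q
  define extend where "extend g = (\<lambda>q. if q \<in> states G then g q else Bot)" for g :: "'a \<Rightarrow> val"
  have "{f'. fsucc G f \<sigma> f'} \<subseteq> extend ` (PiE (states G) A)"
  proof
    fix f' assume "f' \<in> {f'. fsucc G f \<sigma> f'}"
    then have fs: "fsucc G f \<sigma> f'"
      by simp
    have "supp f' \<subseteq> states G"
      using fsucc_supp[OF fs] mpg_lo_obs[OF lo] by blast
    then have "f' = extend (restrict f' (states G))"
      by (intro ext) (auto simp: extend_def supp_def)
    moreover have "f' q \<in> A q" for q
    proof (cases "q \<in> supp f'")
      case True
      then show ?thesis
        using fs unfolding fsucc_iff A_def by blast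
    next
      case False
      then show ?thesis
        by (simp add: A_def supp_def)
    qed
    then have "restrict f' (states G) \<in> PiE (states G) A"
      by simp
    ultimately show "f' \<in> extend ` (PiE (states G) A)"
      by blast
  qed
  moreover have "finite (PiE (states G) A)"
    using mpg_lo_finite_states[OF lo] unfolding A_def by (intro finite_PiE) auto
  ultimately show ?thesis
    using finite_subset by blast
qed

section \<open>Histories of the reachability game\<close>

lemma last_eq_nth: "length xs = Suc n \<Longrightarrow> last xs = xs ! n"
  by (cases xs rule: rev_cases) auto

lemma in_Pi_length: "in_Pi G fs ss \<Longrightarrow> length fs = Suc (length ss)"
  unfolding in_Pi_def by blast

lemma in_Pi_take:
  assumes "in_Pi G fs ss" "k \<le> length ss"
  shows "in_Pi G (take (Suc k) fs) (take k ss)"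
  using assms unfolding in_Pi_def by (auto simp: min_def)

lemma in_Pi_snoc_fsucc:
  assumes "in_Pi G (fs @ [f]) (ss @ [\<sigma>])"
  shows "fsucc G (last fs) \<sigma> f"
proof -
  have len: "length fs = Suc (length ss)"
    using in_Pi_length[OF assms] by simp
  have "\<forall>i<length (ss @ [\<sigma>]). fsucc G ((fs @ [f]) ! i) ((ss @ [\<sigma>]) ! i) ((fs @ [f]) ! Suc i)"
    using assms unfolding in_Pi_def by blast
  then have "fsucc G ((fs @ [f]) ! length ss) ((ss @ [\<sigma>]) ! length ss) ((fs @ [f]) ! Suc (length ss))"
    by (metis length_append_singleton lessI)
  then show ?thesis
    using len by (simp add: nth_append last_eq_nth)
qed

text \<open>The cycle conditions of $\Pi_G$ never involve the last node, so any other successor may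
  replace it.\<close>

lemma in_Pi_snoc_replace:
  assumes "in_Pi G (fs @ [f]) (ss @ [\<sigma>])" "fsucc G (last fs) \<sigma> f'"
  shows "in_Pi G (fs @ [f']) (ss @ [\<sigma>])"
proof -
  have len: "length fs = Suc (length ss)"
    using in_Pi_length[OF assms(1)] by simp
  have same: "(fs @ [f']) ! i = (fs @ [f]) ! i" if "i \<le> length ss" for i
    using that len by (simp add: nth_append)
  have "fsucc G ((fs @ [f']) ! i) ((ss @ [\<sigma>]) ! i) ((fs @ [f']) ! Suc i)"
    if "i < Suc (length ss)" for i
  proof (cases "i = length ss")
    case True
    then show ?thesis
      using assms(2) len by (simp add: nth_append last_eq_nth)
  next
    case False
    then show ?thesis
      using that assms(1) same[of i] same[of "Suc i"] unfolding in_Pi_def by auto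
  qed
  moreover have "\<not> fprec 0 ((fs @ [f']) ! i) ((fs @ [f']) ! j) \<and> \<not> fprec 1 ((fs @ [f']) ! j) ((fs @ [f']) ! i)"
    if "i < j" "j < Suc (length ss)" for i j
    using that assms(1) same[of i] same[of j] unfolding in_Pi_def by auto
  ultimately show ?thesis
    using assms(1) len same[of 0] unfolding in_Pi_def by auto
qed

definition unstopped :: "('q, 'a) mpg \<Rightarrow> ('q \<Rightarrow> val) list \<Rightarrow> 'a list \<Rightarrow> bool" where
  "unstopped G fs ss \<longleftrightarrow> \<not> T_E G fs ss \<and> \<not> T_A G fs ss"

lemma gam_hist_take:
  assumes "gam_hist G fs ss" "k \<le> length ss"
  shows "gam_hist G (take (Suc k) fs) (take k ss)"
proof -
  have "set (take k ss) \<subseteq> acts G"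
    using assms(1) set_take_subset unfolding gam_hist_def by fastforce
  moreover have "in_Pi G (take (Suc k) fs) (take k ss)"
    using assms in_Pi_take unfolding gam_hist_def by blast
  ultimately show ?thesis
    using assms unfolding gam_hist_def by (auto simp: min_def)
qed

lemma gam_hist_take_unstopped:
  "gam_hist G fs ss \<Longrightarrow> k < length ss \<Longrightarrow> unstopped G (take (Suc k) fs) (take k ss)"
  unfolding gam_hist_def unstopped_def by blast

lemma gam_hist_snoc:
  assumes "gam_hist G fs ss" "unstopped G fs ss" "\<sigma> \<in> acts G" "in_Pi G (fs @ [f]) (ss @ [\<sigma>])"
  shows "gam_hist G (fs @ [f]) (ss @ [\<sigma>])"
proof -
  have len: "length fs = Suc (length ss)"
    using assms(1) in_Pi_length unfolding gam_hist_def by blast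
  have "unstopped G (take (Suc k) (fs @ [f])) (take k (ss @ [\<sigma>]))" if "k < Suc (length ss)" for k
  proof (cases "k = length ss")
    case True
    then show ?thesis using assms(2) len by simp
  next
    case False
    then show ?thesis
      using that gam_hist_take_unstopped[OF assms(1), of k] len by simp
  qed
  then show ?thesis
    using assms unfolding gam_hist_def unstopped_def by auto
qed

lemma gam_hist_init:
  shows "gam_hist G [fI G] []" and "unstopped G [fI G] []"
  unfolding gam_hist_def in_Pi_def unstopped_def T_E_def T_A_def by simp_all

lemma gam_eve_cons_take:
  "gam_eve_cons s fs ss \<Longrightarrow> k \<le> length ss \<Longrightarrow> gam_eve_cons s (take (Suc k) fs) (take k ss)"
  unfolding gam_eve_cons_def by (auto simp: min_def)

lemma gam_eve_cons_snoc:
  assumes "gam_eve_cons s fs ss" "length fs = Suc (length ss)"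
  shows "gam_eve_cons s (fs @ [f]) (ss @ [s fs ss])"
  using assms unfolding gam_eve_cons_def by (auto simp: nth_append less_Suc_eq)

lemma gam_adam_cons_take:
  "gam_adam_cons s fs ss \<Longrightarrow> k \<le> length ss \<Longrightarrow> length fs = Suc (length ss) \<Longrightarrow>
     gam_adam_cons s (take (Suc k) fs) (take k ss)"
  unfolding gam_adam_cons_def by (auto simp: min_def)

lemma gam_adam_cons_snoc:
  assumes "gam_adam_cons s fs ss" "length fs = Suc (length ss)"
  shows "gam_adam_cons s (fs @ [s fs ss \<sigma>]) (ss @ [\<sigma>])"
  using assms unfolding gam_adam_cons_def by (auto simp: nth_append less_Suc_eq)

definition rewind :: "(nat \<Rightarrow> bool) \<Rightarrow> 'f list \<Rightarrow> 's list \<Rightarrow> 'f list \<times> 's list" where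
  "rewind P fs ss = (if \<exists>i<length ss. P i
     then let i = SOME i. i < length ss \<and> P i in (take (Suc i) fs, take i ss)
     else (fs, ss))"

lemma rewind_cases:
  obtains
    (no_cycle) "\<not> (\<exists>i<length ss. P i)" and "rewind P fs ss = (fs, ss)"
  | (cycle) i where "i < length ss" and "P i" and "rewind P fs ss = (take (Suc i) fs, take i ss)"
proof (cases "\<exists>i<length ss. P i")
  case True
  define i where "i = (SOME i. i < length ss \<and> P i)"
  have "i < length ss \<and> P i"
    using True unfolding i_def by (rule someI_ex)
  moreover have "rewind P fs ss = (take (Suc i) fs, take i ss)"
    using True by (simp add: rewind_def i_def Let_def)
  ultimately show ?thesis
    using cycle by blast
next
  case False
  moreover have "rewind P fs ss = (fs, ss)"
    unfolding rewind_def using False by (rule if_not_P)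
  ultimately show ?thesis
    using no_cycle by blast
qed

section \<open>Strategies realised by finite machines\<close>

definition eve_machine_strategy ::
  "('m \<Rightarrow> 'q set \<Rightarrow> 'm) \<Rightarrow> ('m \<Rightarrow> 'q set \<Rightarrow> 'a) \<Rightarrow> 'm \<Rightarrow> 'q set list \<Rightarrow> 'a list \<Rightarrow> 'a" where
  "eve_machine_strategy upd out m0 ol al = out (foldl upd m0 (butlast ol)) (last ol)"

definition adam_machine_strategy ::
  "('m \<Rightarrow> 'q set \<Rightarrow> 'a \<Rightarrow> 'm) \<Rightarrow> ('m \<Rightarrow> 'q set \<Rightarrow> 'a \<Rightarrow> 'q set) \<Rightarrow> 'm \<Rightarrow>
     'q set list \<Rightarrow> 'a list \<Rightarrow> 'a \<Rightarrow> 'q set" where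
  "adam_machine_strategy upd out m0 ol al \<sigma> =
     out (foldl (\<lambda>m (ob, \<sigma>'). upd m ob \<sigma>') m0 (zip (butlast ol) al)) (last ol) \<sigma>"

lemma foldl_closed:
  assumes "\<And>m x. m \<in> M \<Longrightarrow> x \<in> A \<Longrightarrow> f m x \<in> M" "m \<in> M" "set xs \<subseteq> A"
  shows "foldl f m xs \<in> M"
  using assms(2,3) by (induction xs arbitrary: m) (simp_all add: assms(1))

lemma foldl_encode:
  assumes closed: "\<And>m x. m \<in> M \<Longrightarrow> x \<in> A \<Longrightarrow> f m x \<in> M"
    and g: "\<And>m x. m \<in> M \<Longrightarrow> x \<in> A \<Longrightarrow> g (enc m) x = enc (f m x)"
    and "m \<in> M" "set xs \<subseteq> A"
  shows "foldl g (enc m) xs = enc (foldl f m xs)"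
  using assms(3,4) by (induction xs arbitrary: m) (simp_all add: g closed)

lemma is_pref_butlast_last:
  assumes "is_pref G ol al"
  shows "set (butlast ol) \<subseteq> obs G" "last ol \<in> obs G" "set (zip (butlast ol) al) \<subseteq> obs G \<times> acts G"
proof -
  have ol: "set ol \<subseteq> obs G" "ol \<noteq> []" and al: "set al \<subseteq> acts G"
    using is_prefD[OF assms] by auto
  then show "set (butlast ol) \<subseteq> obs G" "last ol \<in> obs G"
    by (auto dest: in_set_butlastD)
  then show "set (zip (butlast ol) al) \<subseteq> obs G \<times> acts G"
    using al by (auto dest: set_zip_leftD set_zip_rightD)
qed

text \<open>Memory states of an arbitrary finite set are encoded by natural numbers, as demanded by
  \<open>eve_finite_mem\<close> and \<open>adam_finite_mem\<close>.\<close>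

lemma eve_machine_strategy:
  fixes upd :: "'m \<Rightarrow> 'q set \<Rightarrow> 'm" and out :: "'m \<Rightarrow> 'q set \<Rightarrow> 'a"
  assumes fin: "finite M" and m0: "m0 \<in> M"
    and closed: "\<And>m ob. m \<in> M \<Longrightarrow> ob \<in> obs G \<Longrightarrow> upd m ob \<in> M \<and> out m ob \<in> acts G"
  shows "eve_obs_strat G (eve_machine_strategy upd out m0)"
    and "eve_finite_mem G (eve_machine_strategy upd out m0)"
proof -
  have run: "foldl upd m0 obl \<in> M" if "set obl \<subseteq> obs G" for obl
    using foldl_closed[of M "obs G" upd, OF _ m0 that] closed by blast
  show "eve_obs_strat G (eve_machine_strategy upd out m0)"
    unfolding eve_obs_strat_def eve_machine_strategy_def
    using closed run is_pref_butlast_last by blast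
  obtain enc :: "'m \<Rightarrow> nat" and N where "enc ` M = {i. i < N}" "inj_on enc M"
    using finite_imp_inj_to_nat_seg[OF fin] by blast
  then have dec: "inv_into M enc (enc m) = m" if "m \<in> M" for m
    using that by simp
  define au where "au i ob = enc (upd (inv_into M enc i) ob)" for i ob
  define ao where "ao i ob = out (inv_into M enc i) ob" for i ob
  have "foldl au (enc m0) obl = enc (foldl upd m0 obl)" if "set obl \<subseteq> obs G" for obl
    using foldl_encode[of M "obs G" upd au enc, OF _ _ m0 that] closed dec
    by (simp add: au_def)
  then have "eve_machine_strategy upd out m0 ol al = ao (foldl au (enc m0) (butlast ol)) (last ol)"
    if "is_pref G ol al" for ol al
    using that is_pref_butlast_last[OF that] run dec
    by (simp add: eve_machine_strategy_def ao_def)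
  moreover have "au m ob \<in> enc ` M \<and> ao m ob \<in> acts G" if "m \<in> enc ` M" "ob \<in> obs G" for m ob
    using that closed dec by (auto simp: au_def ao_def)
  ultimately show "eve_finite_mem G (eve_machine_strategy upd out m0)"
    unfolding eve_finite_mem_def using fin m0
    by (intro exI[of _ "enc ` M"] exI[of _ "enc m0"] exI[of _ au] exI[of _ ao]) auto
qed

lemma adam_machine_strategy:
  fixes upd :: "'m \<Rightarrow> 'q set \<Rightarrow> 'a \<Rightarrow> 'm" and out :: "'m \<Rightarrow> 'q set \<Rightarrow> 'a \<Rightarrow> 'q set"
  assumes fin: "finite M" and m0: "m0 \<in> M"
    and closed: "\<And>m ob \<sigma>. m \<in> M \<Longrightarrow> ob \<in> obs G \<Longrightarrow> \<sigma> \<in> acts G \<Longrightarrow>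
       upd m ob \<sigma> \<in> M \<and> out m ob \<sigma> \<in> obs G \<and> out m ob \<sigma> \<inter> post G \<sigma> ob \<noteq> {}"
  shows "adam_obs_strat G (adam_machine_strategy upd out m0)"
    and "adam_finite_mem G (adam_machine_strategy upd out m0)"
proof -
  define f where "f = (\<lambda>m (ob, \<sigma>'). upd m ob \<sigma>')"
  have f_closed: "f m x \<in> M" if "m \<in> M" "x \<in> obs G \<times> acts G" for m x
    using that closed by (auto simp: f_def)
  have run: "foldl f m0 xs \<in> M" if "set xs \<subseteq> obs G \<times> acts G" for xs
    using foldl_closed[where f = f, OF f_closed m0 that] by blast
  show "adam_obs_strat G (adam_machine_strategy upd out m0)"
    unfolding adam_obs_strat_def adam_machine_strategy_def f_def[symmetric]
    using closed run is_pref_butlast_last by blast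
  obtain enc :: "'m \<Rightarrow> nat" and N where "enc ` M = {i. i < N}" "inj_on enc M"
    using finite_imp_inj_to_nat_seg[OF fin] by blast
  then have dec: "inv_into M enc (enc m) = m" if "m \<in> M" for m
    using that by simp
  define au where "au i ob \<sigma> = enc (upd (inv_into M enc i) ob \<sigma>)" for i ob \<sigma>
  define ao where "ao i ob \<sigma> = out (inv_into M enc i) ob \<sigma>" for i ob \<sigma>
  have "foldl (\<lambda>m (ob, \<sigma>'). au m ob \<sigma>') (enc m0) xs = enc (foldl f m0 xs)"
    if "set xs \<subseteq> obs G \<times> acts G" for xs
    using foldl_encode[where f = f and g = "\<lambda>m (ob, \<sigma>'). au m ob \<sigma>'" and enc = enc,
        OF f_closed _ m0 that] dec
    by (auto simp: au_def f_def)
  then have "adam_machine_strategy upd out m0 ol al \<sigma> =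
      ao (foldl (\<lambda>m (ob, \<sigma>'). au m ob \<sigma>') (enc m0) (zip (butlast ol) al)) (last ol) \<sigma>"
    if "is_pref G ol al" for ol al \<sigma>
    using that is_pref_butlast_last[OF that] run dec
    by (simp add: adam_machine_strategy_def ao_def f_def)
  moreover have "au m ob \<sigma> \<in> enc ` M \<and> ao m ob \<sigma> \<in> obs G"
    if "m \<in> enc ` M" "ob \<in> obs G" "\<sigma> \<in> acts G" for m ob \<sigma>
    using that closed dec by (auto simp: au_def ao_def)
  ultimately show "adam_finite_mem G (adam_machine_strategy upd out m0)"
    unfolding adam_finite_mem_def using fin m0
    by (intro exI[of _ "enc ` M"] exI[of _ "enc m0"] exI[of _ au] exI[of _ ao]) auto
qed

lemma eve_cons_play_machine:
  assumes "eve_cons_play (eve_machine_strategy upd out m0) os as"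
  shows "as n = out (foldl upd m0 (map os [0..<n])) (os n)"
  using assms unfolding eve_cons_play_def eve_machine_strategy_def by simp

lemma adam_cons_play_machine:
  assumes "adam_cons_play (adam_machine_strategy upd out m0) os as"
  shows "os (Suc n) =
    out (foldl (\<lambda>m (ob, \<sigma>). upd m ob \<sigma>) m0 (zip (map os [0..<n]) (map as [0..<n]))) (os n) (as n)"
  using assms unfolding adam_cons_play_def adam_machine_strategy_def by simp

section \<open>Bounded values and mean payoffs\<close>

lemma finite_hist_values_bounded:
  assumes "finite H" "finite Q"
  obtains B where "\<And>fs ss q a. (fs, ss) \<in> H \<Longrightarrow> q \<in> Q \<Longrightarrow> last fs q = Fin a \<Longrightarrow> \<bar>a\<bar> \<le> B"
proof
  define V where "V = (\<lambda>((fs, ss), q). \<bar>the_Fin (last fs q)\<bar>) ` (H \<times> Q)"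
  have "finite V"
    using assms unfolding V_def by simp
  fix fs ss q a assume "(fs, ss) \<in> H" "q \<in> Q" "last fs q = Fin a"
  then have "\<bar>a\<bar> \<in> V"
    unfolding V_def by (auto intro!: image_eqI[where x = "((fs, ss), q)"])
  then show "\<bar>a\<bar> \<le> Max V"
    using \<open>finite V\<close> by simp
qed

lemma liminf_nonneg:
  fixes X :: "nat \<Rightarrow> real"
  assumes "\<And>n. b \<le> X n"
  shows "0 \<le> Liminf sequentially (\<lambda>n. ereal (X n / real n))"
proof -
  have "(\<lambda>n. ereal (b / real n)) \<longlonglongrightarrow> ereal 0"
    using lim_const_over_n[of b] by simp
  then have "Liminf sequentially (\<lambda>n. ereal (b / real n)) = 0"
    by (simp add: lim_imp_Liminf zero_ereal_def)
  moreover have "eventually (\<lambda>n. ereal (b / real n) \<le> ereal (X n / real n)) sequentially"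
    using assms by (simp add: divide_right_mono)
  ultimately show ?thesis
    using Liminf_mono by metis
qed

text \<open>From $S_n \le C - J_n$ and $J_n \ge (n - L)/(L + 1)$ the averages $S_n/n$ are eventually
  below $-1/(2(L+1))$.\<close>

lemma liminf_average_negative:
  fixes S :: "nat \<Rightarrow> int" and J :: "nat \<Rightarrow> nat" and L :: nat
  assumes A: "\<And>n. S n + int (J n) \<le> C" and B: "\<And>n. n \<le> L + (L + 1) * J n"
  shows "Liminf sequentially (\<lambda>n. ereal (real_of_int (S n) / real n)) < 0"
proof -
  define K where "K = (int L + 1) * C + int L"
  define e where "e = 1 / (2 * (real L + 1))"
  have ev: "eventually (\<lambda>n. ereal (real_of_int (S n) / real n) \<le> ereal (- e)) sequentially"
    unfolding eventually_sequentially
  proof (intro exI[of _ "nat (2 * K) + 1"] allI impI)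
    fix n assume n: "nat (2 * K) + 1 \<le> n"
    have "(int L + 1) * S n \<le> (int L + 1) * (C - int (J n))"
      using A[of n] by (intro mult_left_mono) auto
    also have "\<dots> = (int L + 1) * C - int ((L + 1) * J n)"
      by (simp add: algebra_simps)
    also have "\<dots> \<le> (int L + 1) * C - (int n - int L)"
      using B[of n] by linarith
    finally have "(int L + 1) * S n \<le> K - int n"
      unfolding K_def by linarith
    then have "2 * (int L + 1) * S n \<le> - int n"
      using n by linarith
    then have "2 * (real L + 1) * real_of_int (S n) \<le> - real n"
      by (metis (mono_tags, opaque_lifting) of_int_le_iff of_int_minus of_int_mult
          of_int_of_nat_eq of_int_add of_int_1 of_int_numeral)
    then have "real_of_int (S n) / real n \<le> - e"
      unfolding e_def using n by (simp add: field_simps)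
    then show "ereal (real_of_int (S n) / real n) \<le> ereal (- e)"
      by simp
  qed
  have "Liminf sequentially (\<lambda>n. ereal (real_of_int (S n) / real n))
      \<le> Limsup sequentially (\<lambda>n. ereal (real_of_int (S n) / real n))"
    by (rule Liminf_le_Limsup) simp
  also have "\<dots> \<le> ereal (- e)"
    by (rule Limsup_bounded[OF ev])
  also have "\<dots> < 0"
    by (simp add: e_def)
  finally show ?thesis .
qed

section \<open>Eve\<close>

definition eve_hists ::
  "('q, 'a) mpg \<Rightarrow> (('q \<Rightarrow> val) list \<Rightarrow> 'a list \<Rightarrow> 'a) \<Rightarrow> (('q \<Rightarrow> val) list \<times> 'a list) set" where
  "eve_hists G s = {(fs, ss). gam_hist G fs ss \<and> gam_eve_cons s fs ss}"

lemma eve_hists_length: "(fs, ss) \<in> eve_hists G s \<Longrightarrow> length fs = Suc (length ss)"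
  unfolding eve_hists_def gam_hist_def using in_Pi_length by blast

lemma eve_hists_take:
  "(fs, ss) \<in> eve_hists G s \<Longrightarrow> k \<le> length ss \<Longrightarrow> (take (Suc k) fs, take k ss) \<in> eve_hists G s"
  unfolding eve_hists_def using gam_hist_take gam_eve_cons_take by blast

lemma init_eve_hists: "([fI G], []) \<in> eve_hists G s"
  using gam_hist_init unfolding eve_hists_def gam_eve_cons_def by simp

lemma gamma_eve_winningD:
  assumes "gamma_eve_winning G s"
  shows eve_winning_hist: "\<And>fs ss. (fs, ss) \<in> eve_hists G s \<Longrightarrow> \<not> T_A G fs ss \<and>
      (\<not> T_E G fs ss \<longrightarrow> s fs ss \<in> acts G \<and> (\<exists>f. in_Pi G (fs @ [f]) (ss @ [s fs ss])))"
    and eve_winning_no_branch: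
      "\<not> (\<exists>F S. \<forall>n. (map F [0..<Suc n], map S [0..<n]) \<in> eve_hists G s)"
  using conjunct1[OF assms[unfolded gamma_eve_winning_def]]
    conjunct2[OF assms[unfolded gamma_eve_winning_def]]
  unfolding eve_hists_def by simp_all

lemma eve_hists_snoc:
  assumes W: "gamma_eve_winning G s" and h: "(fs, ss) \<in> eve_hists G s"
    and u: "unstopped G fs ss" and f: "fsucc G (last fs) (s fs ss) f"
  shows "(fs @ [f], ss @ [s fs ss]) \<in> eve_hists G s"
proof -
  have act: "s fs ss \<in> acts G" and "\<exists>f. in_Pi G (fs @ [f]) (ss @ [s fs ss])"
    using eve_winning_hist[OF W h] u unfolding unstopped_def by auto
  then obtain f' where "in_Pi G (fs @ [f']) (ss @ [s fs ss])"
    by blast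
  then have "in_Pi G (fs @ [f]) (ss @ [s fs ss])"
    using f by (rule in_Pi_snoc_replace)
  moreover have "gam_hist G fs ss" "gam_eve_cons s fs ss"
    using h unfolding eve_hists_def by simp_all
  ultimately show ?thesis
    using gam_hist_snoc[OF _ u act] gam_eve_cons_snoc[OF _ eve_hists_length[OF h]]
    unfolding eve_hists_def by simp
qed

lemma eve_hists_snoc_eq:
  assumes h: "(fs, ss) \<in> eve_hists G s" and e: "(fs @ [f], ss @ [\<sigma>]) \<in> eve_hists G s"
  shows "\<sigma> = s fs ss" "fsucc G (last fs) \<sigma> f"
proof -
  have c: "gam_eve_cons s (fs @ [f]) (ss @ [\<sigma>])" and p: "in_Pi G (fs @ [f]) (ss @ [\<sigma>])"
    using e unfolding eve_hists_def gam_hist_def by simp_all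
  show "\<sigma> = s fs ss"
    using spec[of _ "length ss", OF c[unfolded gam_eve_cons_def]] eve_hists_length[OF h]
    by simp
  show "fsucc G (last fs) \<sigma> f"
    using p by (rule in_Pi_snoc_fsucc)
qed

lemma finite_eve_hists:
  assumes lo: "mpg_lo G" and W: "gamma_eve_winning G s"
  shows "finite (eve_hists G s)"
proof (rule finite_histories)
  fix fs ss assume h: "(fs, ss) \<in> eve_hists G s"
  show "length fs = Suc (length ss) \<and> fs ! 0 = fI G"
    using h unfolding eve_hists_def gam_hist_def in_Pi_def by simp
  show "(take (Suc k) fs, take k ss) \<in> eve_hists G s" if "k \<le> length ss" for k
    using eve_hists_take[OF h that] .
  have "{(\<sigma>, f). (fs @ [f], ss @ [\<sigma>]) \<in> eve_hists G s} \<subseteq> {s fs ss} \<times> {f. fsucc G (last fs) (s fs ss) f}"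
    using eve_hists_snoc_eq[OF h] by auto
  then show "finite {(\<sigma>, f). (fs @ [f], ss @ [\<sigma>]) \<in> eve_hists G s}"
    using finite_fsucc[OF lo] finite_subset by blast
next
  show "\<not> (\<exists>F S. \<forall>n. (map F [0..<Suc n], map S [0..<n]) \<in> eve_hists G s)"
    using eve_winning_no_branch[OF W] .
qed

text \<open>Eve cuts back to a node below the current one, so the stored values only decrease.\<close>

definition eve_rewind :: "('q \<Rightarrow> val) list \<Rightarrow> 'a list \<Rightarrow> ('q \<Rightarrow> val) list \<times> 'a list" where
  "eve_rewind fs ss = rewind (\<lambda>i. fprec 0 (fs ! i) (fs ! length ss)) fs ss"

lemma eve_rewind:
  assumes W: "gamma_eve_winning G s" and h: "(fs, ss) \<in> eve_hists G s"
    and r: "eve_rewind fs ss = (fs', ss')"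
  shows "(fs', ss') \<in> eve_hists G s \<and> unstopped G fs' ss' \<and> supp (last fs') = supp (last fs) \<and>
    (\<forall>q\<in>supp (last fs'). vle (last fs' q) (last fs q))"
proof (cases rule: rewind_cases[where P = "\<lambda>i. fprec 0 (fs ! i) (fs ! length ss)"
      and fs = fs and ss = ss])
  case no_cycle
  then have "fs' = fs" "ss' = ss" "\<not> T_E G fs ss"
    using r unfolding eve_rewind_def T_E_def by simp_all
  moreover have "\<not> T_A G fs ss"
    using eve_winning_hist[OF W h] by blast
  moreover have "vle (last fs q) (last fs q)" if "q \<in> supp (last fs)" for q
    using that by (intro vle_refl) (simp add: supp_def)
  ultimately show ?thesis
    using h unfolding unstopped_def by simp
next
  case (cycle i)
  have len: "length fs = Suc (length ss)"
    using eve_hists_length[OF h] .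
  have eq: "fs' = take (Suc i) fs" "ss' = take i ss"
    using cycle r unfolding eve_rewind_def by simp_all
  then have "last fs' = fs ! i" "last fs = fs ! length ss"
    using cycle(1) len by (simp_all add: last_eq_nth)
  moreover have "(fs', ss') \<in> eve_hists G s" "unstopped G fs' ss'"
    using eq eve_hists_take[OF h] gam_hist_take_unstopped[of G fs ss i] h cycle(1)
    unfolding eve_hists_def by simp_all
  ultimately show ?thesis
    using cycle(2) unfolding fprec_def by simp
qed

text \<open>The \<open>else\<close> branch is never taken along a play; it only keeps the memory update total.\<close>

definition eve_advance :: "('q, 'a) mpg \<Rightarrow> (('q \<Rightarrow> val) list \<Rightarrow> 'a list \<Rightarrow> 'a) \<Rightarrow>
    ('q \<Rightarrow> val) list \<times> 'a list \<Rightarrow> 'q set \<Rightarrow> ('q \<Rightarrow> val) list \<times> 'a list" where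
  "eve_advance G s h ob = (case h of (fs, ss) \<Rightarrow>
     if ob \<subseteq> post G (s fs ss) (supp (last fs))
     then eve_rewind (fs @ [min_succ G (last fs) (s fs ss) ob]) (ss @ [s fs ss])
     else ([fI G], []))"

definition eve_next :: "('q, 'a) mpg \<Rightarrow> (('q \<Rightarrow> val) list \<Rightarrow> 'a list \<Rightarrow> 'a) \<Rightarrow>
    (('q \<Rightarrow> val) list \<times> 'a list) option \<Rightarrow> 'q set \<Rightarrow> ('q \<Rightarrow> val) list \<times> 'a list" where
  "eve_next G s m ob = (case m of None \<Rightarrow> ([fI G], []) | Some h \<Rightarrow> eve_advance G s h ob)"

definition eve_strategy :: "('q, 'a) mpg \<Rightarrow> (('q \<Rightarrow> val) list \<Rightarrow> 'a list \<Rightarrow> 'a) \<Rightarrow>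
    'q set list \<Rightarrow> 'a list \<Rightarrow> 'a" where
  "eve_strategy G s = eve_machine_strategy (\<lambda>m ob. Some (eve_next G s m ob))
     (\<lambda>m ob. case_prod s (eve_next G s m ob)) None"

lemma eve_advance_step:
  assumes W: "gamma_eve_winning G s" and h: "(fs, ss) \<in> eve_hists G s"
    and u: "unstopped G fs ss" and ob: "ob \<in> obs G" "ob \<subseteq> post G (s fs ss) (supp (last fs))"
    and lo: "mpg_lo G" and a: "eve_advance G s (fs, ss) ob = (fs', ss')"
  shows "(fs', ss') \<in> eve_hists G s" "unstopped G fs' ss'" "supp (last fs') = ob"
    and "\<And>q q'. q \<in> ob \<Longrightarrow> q' \<in> supp (last fs) \<Longrightarrow> (q', s fs ss, q) \<in> trans G \<Longrightarrow>
           vle (last fs' q) (vadd (last fs q') (weight G q' (s fs ss) q))"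
proof -
  define f where "f = min_succ G (last fs) (s fs ss) ob"
  have "(fs @ [f], ss @ [s fs ss]) \<in> eve_hists G s"
    unfolding f_def using fsucc_min_succ[OF ob] by (rule eve_hists_snoc[OF W h u])
  moreover have "eve_rewind (fs @ [f]) (ss @ [s fs ss]) = (fs', ss')"
    using a ob(2) by (simp add: eve_advance_def f_def)
  ultimately have r: "(fs', ss') \<in> eve_hists G s \<and> unstopped G fs' ss' \<and> supp (last fs') = ob \<and>
      (\<forall>q\<in>ob. vle (last fs' q) (f q))"
    using eve_rewind[OF W] unfolding f_def by fastforce
  then show "(fs', ss') \<in> eve_hists G s" "unstopped G fs' ss'" "supp (last fs') = ob"
    by simp_all
  show "vle (last fs' q) (vadd (last fs q') (weight G q' (s fs ss) q))"
    if "q \<in> ob" "q' \<in> supp (last fs)" "(q', s fs ss, q) \<in> trans G" for q q'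
    using r min_succ_le[OF lo that] vle_trans that(1) unfolding f_def by blast
qed

definition eve_memory ::
  "('q, 'a) mpg \<Rightarrow> (('q \<Rightarrow> val) list \<Rightarrow> 'a list \<Rightarrow> 'a) \<Rightarrow> (('q \<Rightarrow> val) list \<times> 'a list) option set" where
  "eve_memory G s = insert None (Some ` {(fs, ss) \<in> eve_hists G s. unstopped G fs ss})"

lemma eve_next_memory:
  assumes lo: "mpg_lo G" and W: "gamma_eve_winning G s"
    and m: "m \<in> eve_memory G s" and ob: "ob \<in> obs G"
  shows "Some (eve_next G s m ob) \<in> eve_memory G s"
proof -
  have init: "Some ([fI G], []) \<in> eve_memory G s"
    using init_eve_hists gam_hist_init(2) unfolding eve_memory_def by blast
  show ?thesis
  proof (cases m)
    case None
    then show ?thesis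
      using init by (simp add: eve_next_def)
  next
    case (Some h)
    obtain fs ss where h: "h = (fs, ss)" "(fs, ss) \<in> eve_hists G s" "unstopped G fs ss"
      using m Some unfolding eve_memory_def by auto
    show ?thesis
    proof (cases "ob \<subseteq> post G (s fs ss) (supp (last fs))")
      case True
      obtain fs' ss' where a: "eve_advance G s (fs, ss) ob = (fs', ss')"
        by fastforce
      have "(fs', ss') \<in> eve_hists G s" "unstopped G fs' ss'"
        using eve_advance_step[OF W h(2,3) ob True lo a] by simp_all
      then show ?thesis
        using Some h(1) a unfolding eve_memory_def eve_next_def by simp
    next
      case False
      then show ?thesis
        using init Some h(1) by (simp add: eve_next_def eve_advance_def)
    qed
  qed
qed

lemma eve_strategy_obs_finite_mem:
  assumes lo: "mpg_lo G" and W: "gamma_eve_winning G s"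
  shows "eve_obs_strat G (eve_strategy G s)" "eve_finite_mem G (eve_strategy G s)"
proof -
  have "{(fs, ss) \<in> eve_hists G s. unstopped G fs ss} \<subseteq> eve_hists G s"
    by blast
  then have fin: "finite (eve_memory G s)"
    using finite_eve_hists[OF lo W] finite_subset unfolding eve_memory_def by blast
  have out: "case_prod s (eve_next G s m ob) \<in> acts G"
    if m: "m \<in> eve_memory G s" and ob: "ob \<in> obs G" for m ob
  proof -
    obtain fs ss where "eve_next G s m ob = (fs, ss)" "(fs, ss) \<in> eve_hists G s" "unstopped G fs ss"
      using eve_next_memory[OF lo W m ob] unfolding eve_memory_def by auto
    then show ?thesis
      using eve_winning_hist[OF W] unfolding unstopped_def by simp
  qed
  have "None \<in> eve_memory G s"
    unfolding eve_memory_def by simp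
  then show "eve_obs_strat G (eve_strategy G s)" "eve_finite_mem G (eve_strategy G s)"
    unfolding eve_strategy_def
    using eve_machine_strategy[OF fin, of None G] eve_next_memory[OF lo W] out by simp_all
qed

definition eve_node :: "('q, 'a) mpg \<Rightarrow> (('q \<Rightarrow> val) list \<Rightarrow> 'a list \<Rightarrow> 'a) \<Rightarrow> (nat \<Rightarrow> 'q set) \<Rightarrow>
    nat \<Rightarrow> ('q \<Rightarrow> val) list \<times> 'a list" where
  "eve_node G s os n =
     eve_next G s (foldl (\<lambda>m ob. Some (eve_next G s m ob)) None (map os [0..<n])) (os n)"

lemma eve_node_0: "eve_node G s os 0 = ([fI G], [])"
  by (simp add: eve_node_def eve_next_def)

lemma eve_node_Suc: "eve_node G s os (Suc n) = eve_advance G s (eve_node G s os n) (os (Suc n))"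
  by (simp add: eve_node_def eve_next_def)

lemma eve_strategy_act:
  "eve_cons_play (eve_strategy G s) os as \<Longrightarrow> as n = case_prod s (eve_node G s os n)"
  using eve_cons_play_machine[where upd = "\<lambda>m ob. Some (eve_next G s m ob)"]
  by (simp add: eve_strategy_def eve_node_def)

lemma eve_node_values:
  assumes lo: "mpg_lo G" and W: "gamma_eve_winning G s" and p: "is_play G os as"
    and c: "eve_cons_play (eve_strategy G s) os as" and qs: "is_concrete G os as qs"
  shows "eve_node G s os n \<in> eve_hists G s \<and> case_prod (unstopped G) (eve_node G s os n) \<and>
    supp (last (fst (eve_node G s os n))) = os n \<and>
    vle (last (fst (eve_node G s os n)) (qs n)) (Fin (\<Sum>i<n. weight G (qs i) (as i) (qs (Suc i))))"
proof (induction n)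
  case 0
  have "os 0 = {init G}"
    using p unfolding is_play_def by simp
  moreover have "qs 0 \<in> os 0"
    using qs unfolding is_concrete_def by simp
  ultimately show ?case
    using init_eve_hists[of G s] gam_hist_init(2)[of G]
    by (simp add: eve_node_0 fI_def supp_def)
next
  case (Suc n)
  obtain fs ss where nd: "eve_node G s os n = (fs, ss)"
    by fastforce
  then have IH: "(fs, ss) \<in> eve_hists G s" "unstopped G fs ss" "supp (last fs) = os n"
    "vle (last fs (qs n)) (Fin (\<Sum>i<n. weight G (qs i) (as i) (qs (Suc i))))"
    using Suc.IH by simp_all
  have \<sigma>: "as n = s fs ss"
    using eve_strategy_act[OF c, of n] nd by simp
  have ob: "os (Suc n) \<in> obs G" "os (Suc n) \<subseteq> post G (s fs ss) (supp (last fs))"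
    using p play_obs_subset_post[OF lo p, of n] IH(3) \<sigma> unfolding is_play_def by auto
  obtain fs' ss' where a: "eve_advance G s (fs, ss) (os (Suc n)) = (fs', ss')"
    by fastforce
  note step = eve_advance_step[OF W IH(1,2) ob lo a]
  have "qs i \<in> os i \<and> (qs i, as i, qs (Suc i)) \<in> trans G" for i
    using qs unfolding is_concrete_def by simp
  then have q: "qs (Suc n) \<in> os (Suc n)" "qs n \<in> supp (last fs)" "(qs n, s fs ss, qs (Suc n)) \<in> trans G"
    using IH(3) \<sigma> by metis+
  have "vle (last fs' (qs (Suc n))) (vadd (last fs (qs n)) (weight G (qs n) (as n) (qs (Suc n))))"
    using step(4)[OF q] \<sigma> by simp
  moreover have "vle (vadd (last fs (qs n)) (weight G (qs n) (as n) (qs (Suc n))))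
      (Fin (\<Sum>i<Suc n. weight G (qs i) (as i) (qs (Suc i))))"
    using vle_vadd_mono[OF IH(4)] by simp
  ultimately show ?case
    using eve_node_Suc[of G s os n] nd a step(1-3) vle_trans by auto
qed

lemma eve_strategy_wins:
  assumes lo: "mpg_lo G" and W: "gamma_eve_winning G s" and p: "is_play G os as"
    and c: "eve_cons_play (eve_strategy G s) os as"
  shows "eve_wins_play G os as"
  unfolding eve_wins_play_def
proof (intro allI impI)
  fix qs assume qs: "is_concrete G os as qs"
  obtain B where B: "\<And>fs ss q a. (fs, ss) \<in> eve_hists G s \<Longrightarrow> q \<in> states G \<Longrightarrow>
      last fs q = Fin a \<Longrightarrow> \<bar>a\<bar> \<le> B"
    using finite_hist_values_bounded[OF finite_eve_hists[OF lo W] mpg_lo_finite_states[OF lo]]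
    by blast
  have "- B \<le> (\<Sum>i<n. weight G (qs i) (as i) (qs (Suc i)))" for n
  proof -
    obtain fs ss where "eve_node G s os n = (fs, ss)"
      by fastforce
    then have h: "(fs, ss) \<in> eve_hists G s"
      and "vle (last fs (qs n)) (Fin (\<Sum>i<n. weight G (qs i) (as i) (qs (Suc i))))"
      using eve_node_values[OF lo W p c qs, of n] by simp_all
    then obtain a where a: "last fs (qs n) = Fin a"
      "a \<le> (\<Sum>i<n. weight G (qs i) (as i) (qs (Suc i)))"
      using vle_Fin_iff by blast
    have "\<bar>a\<bar> \<le> B"
      using B[OF h concrete_in_states[OF lo p qs] a(1)] .
    then show ?thesis
      using a(2) by linarith
  qed
  then have "real_of_int (- B) \<le> (\<Sum>i<n. real_of_int (weight G (qs i) (as i) (qs (Suc i))))" for n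
    by (metis of_int_le_iff of_int_sum)
  then show "0 \<le> mp_inf G as qs"
    unfolding mp_inf_def by (rule liminf_nonneg)
qed

lemma gamma_eve_winning_obs_strategy:
  assumes "mpg_lo G" "gamma_eve_winning G s"
  shows "eve_winning_obs G (eve_strategy G s)" "eve_finite_mem G (eve_strategy G s)"
  using eve_strategy_obs_finite_mem[OF assms] eve_strategy_wins[OF assms]
  unfolding eve_winning_obs_def by blast+

section \<open>Adam\<close>

definition adam_hists :: "('q, 'a) mpg \<Rightarrow> (('q \<Rightarrow> val) list \<Rightarrow> 'a list \<Rightarrow> 'a \<Rightarrow> ('q \<Rightarrow> val)) \<Rightarrow>
    (('q \<Rightarrow> val) list \<times> 'a list) set" where
  "adam_hists G s = {(fs, ss). gam_hist G fs ss \<and> gam_adam_cons s fs ss}"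

lemma adam_hists_length: "(fs, ss) \<in> adam_hists G s \<Longrightarrow> length fs = Suc (length ss)"
  unfolding adam_hists_def gam_hist_def using in_Pi_length by blast

lemma adam_hists_take:
  assumes "(fs, ss) \<in> adam_hists G s" "k \<le> length ss"
  shows "(take (Suc k) fs, take k ss) \<in> adam_hists G s"
  using assms gam_hist_take gam_adam_cons_take adam_hists_length[OF assms(1)]
  unfolding adam_hists_def by blast

lemma init_adam_hists: "([fI G], []) \<in> adam_hists G s"
  using gam_hist_init unfolding adam_hists_def gam_adam_cons_def by simp

lemma gamma_adam_winningD:
  assumes "gamma_adam_winning G s"
  shows adam_winning_hist: "\<And>fs ss. (fs, ss) \<in> adam_hists G s \<Longrightarrow> \<not> T_E G fs ss \<and>
      (\<not> T_A G fs ss \<longrightarrow> (\<forall>\<sigma>\<in>acts G. in_Pi G (fs @ [s fs ss \<sigma>]) (ss @ [\<sigma>])))"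
    and adam_winning_no_branch:
      "\<not> (\<exists>F S. \<forall>n. (map F [0..<Suc n], map S [0..<n]) \<in> adam_hists G s)"
  using conjunct1[OF assms[unfolded gamma_adam_winning_def]]
    conjunct2[OF assms[unfolded gamma_adam_winning_def]]
  unfolding adam_hists_def by simp_all

lemma adam_hists_snoc:
  assumes W: "gamma_adam_winning G s" and h: "(fs, ss) \<in> adam_hists G s"
    and u: "unstopped G fs ss" and \<sigma>: "\<sigma> \<in> acts G"
  shows "(fs @ [s fs ss \<sigma>], ss @ [\<sigma>]) \<in> adam_hists G s"
    and "fsucc G (last fs) \<sigma> (s fs ss \<sigma>)"
proof -
  have p: "in_Pi G (fs @ [s fs ss \<sigma>]) (ss @ [\<sigma>])"
    using adam_winning_hist[OF W h] u \<sigma> unfolding unstopped_def by blast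
  then show "fsucc G (last fs) \<sigma> (s fs ss \<sigma>)"
    by (rule in_Pi_snoc_fsucc)
  moreover have "gam_hist G fs ss" "gam_adam_cons s fs ss"
    using h unfolding adam_hists_def by simp_all
  ultimately show "(fs @ [s fs ss \<sigma>], ss @ [\<sigma>]) \<in> adam_hists G s"
    using p gam_hist_snoc[OF _ u \<sigma>] gam_adam_cons_snoc[OF _ adam_hists_length[OF h]]
    unfolding adam_hists_def by simp
qed

lemma adam_hists_snoc_eq:
  assumes h: "(fs, ss) \<in> adam_hists G s" and e: "(fs @ [f], ss @ [\<sigma>]) \<in> adam_hists G s"
  shows "f = s fs ss \<sigma>" "\<sigma> \<in> acts G"
proof -
  have c: "gam_adam_cons s (fs @ [f]) (ss @ [\<sigma>])" and "set (ss @ [\<sigma>]) \<subseteq> acts G"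
    using e unfolding adam_hists_def gam_hist_def by simp_all
  then show "\<sigma> \<in> acts G"
    by simp
  show "f = s fs ss \<sigma>"
    using spec[of _ "length ss", OF c[unfolded gam_adam_cons_def]] adam_hists_length[OF h]
    by (simp add: nth_append)
qed

lemma finite_adam_hists:
  assumes lo: "mpg_lo G" and W: "gamma_adam_winning G s"
  shows "finite (adam_hists G s)"
proof (rule finite_histories)
  fix fs ss assume h: "(fs, ss) \<in> adam_hists G s"
  show "length fs = Suc (length ss) \<and> fs ! 0 = fI G"
    using h unfolding adam_hists_def gam_hist_def in_Pi_def by simp
  show "(take (Suc k) fs, take k ss) \<in> adam_hists G s" if "k \<le> length ss" for k
    using adam_hists_take[OF h that] .
  have "{(\<sigma>, f). (fs @ [f], ss @ [\<sigma>]) \<in> adam_hists G s} \<subseteq> (\<lambda>\<sigma>. (\<sigma>, s fs ss \<sigma>)) ` acts G"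
    using adam_hists_snoc_eq[OF h] by auto
  then show "finite {(\<sigma>, f). (fs @ [f], ss @ [\<sigma>]) \<in> adam_hists G s}"
    using mpg_lo_finite_acts[OF lo] finite_subset by blast
next
  show "\<not> (\<exists>F S. \<forall>n. (map F [0..<Suc n], map S [0..<n]) \<in> adam_hists G s)"
    using adam_winning_no_branch[OF W] .
qed

text \<open>Adam cuts back to a node above the current one, so the stored values go up.\<close>

definition adam_rewind :: "('q \<Rightarrow> val) list \<Rightarrow> 'a list \<Rightarrow> ('q \<Rightarrow> val) list \<times> 'a list" where
  "adam_rewind fs ss =
     rewind (\<lambda>i. fprec 1 (fs ! length ss) (fs ! i) \<and> (\<exists>q\<in>supp (fs ! i). (fs ! i) q \<noteq> PInf)) fs ss"

lemma adam_rewind: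
  assumes W: "gamma_adam_winning G s" and h: "(fs, ss) \<in> adam_hists G s"
    and r: "adam_rewind fs ss = (fs', ss')"
  shows "(fs', ss') \<in> adam_hists G s \<and> unstopped G fs' ss' \<and> supp (last fs') = supp (last fs)"
    and "\<not> T_A G fs ss \<Longrightarrow> fs' = fs \<and> ss' = ss"
    and "T_A G fs ss \<Longrightarrow> length ss' < length ss \<and>
      (\<forall>q\<in>supp (last fs'). vle (vadd (last fs q) 1) (last fs' q)) \<and> (\<exists>q\<in>supp (last fs'). last fs' q \<noteq> PInf)"
proof -
  have "((fs', ss') \<in> adam_hists G s \<and> unstopped G fs' ss' \<and> supp (last fs') = supp (last fs)) \<and>
    (\<not> T_A G fs ss \<longrightarrow> fs' = fs \<and> ss' = ss) \<and>
    (T_A G fs ss \<longrightarrow> length ss' < length ss \<and>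
      (\<forall>q\<in>supp (last fs'). vle (vadd (last fs q) 1) (last fs' q)) \<and> (\<exists>q\<in>supp (last fs'). last fs' q \<noteq> PInf))"
  proof (cases rule: rewind_cases[where fs = fs and ss = ss and
      P = "\<lambda>i. fprec 1 (fs ! length ss) (fs ! i) \<and> (\<exists>q\<in>supp (fs ! i). (fs ! i) q \<noteq> PInf)"])
    case no_cycle
    then have "fs' = fs" "ss' = ss" "\<not> T_A G fs ss"
      using r unfolding adam_rewind_def T_A_def by simp_all
    moreover have "\<not> T_E G fs ss"
      using adam_winning_hist[OF W h] by blast
    ultimately show ?thesis
      using h unfolding unstopped_def by simp
  next
    case (cycle i)
    have len: "length fs = Suc (length ss)"
      using adam_hists_length[OF h] .
    have eq: "fs' = take (Suc i) fs" "ss' = take i ss"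
      using cycle r unfolding adam_rewind_def by simp_all
    then have "last fs' = fs ! i" "last fs = fs ! length ss"
      using cycle(1) len by (simp_all add: last_eq_nth)
    moreover have "(fs', ss') \<in> adam_hists G s" "unstopped G fs' ss'"
      using eq adam_hists_take[OF h] gam_hist_take_unstopped[of G fs ss i] h cycle(1)
      unfolding adam_hists_def by simp_all
    moreover have "T_A G fs ss"
      using h cycle(1,2) unfolding T_A_def adam_hists_def gam_hist_def by blast
    ultimately show ?thesis
      using cycle eq unfolding fprec_def by auto
  qed
  then show "(fs', ss') \<in> adam_hists G s \<and> unstopped G fs' ss' \<and> supp (last fs') = supp (last fs)"
    "\<not> T_A G fs ss \<Longrightarrow> fs' = fs \<and> ss' = ss"
    "T_A G fs ss \<Longrightarrow> length ss' < length ss \<and>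
      (\<forall>q\<in>supp (last fs'). vle (vadd (last fs q) 1) (last fs' q)) \<and> (\<exists>q\<in>supp (last fs'). last fs' q \<noteq> PInf)"
    by blast+
qed

text \<open>As for Eve, the junk branches are never taken along a play.\<close>

definition adam_junk_obs :: "('q, 'a) mpg \<Rightarrow> 'q set \<Rightarrow> 'a \<Rightarrow> 'q set" where
  "adam_junk_obs G ob \<sigma> = (SOME o'. o' \<in> obs G \<and> o' \<inter> post G \<sigma> ob \<noteq> {})"

definition adam_update :: "('q, 'a) mpg \<Rightarrow> (('q \<Rightarrow> val) list \<Rightarrow> 'a list \<Rightarrow> 'a \<Rightarrow> ('q \<Rightarrow> val)) \<Rightarrow>
    ('q \<Rightarrow> val) list \<times> 'a list \<Rightarrow> 'q set \<Rightarrow> 'a \<Rightarrow> ('q \<Rightarrow> val) list \<times> 'a list" where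
  "adam_update G s h ob \<sigma> = (case h of (fs, ss) \<Rightarrow>
     if ob = supp (last fs) then adam_rewind (fs @ [s fs ss \<sigma>]) (ss @ [\<sigma>]) else ([fI G], []))"

definition adam_out :: "('q, 'a) mpg \<Rightarrow> (('q \<Rightarrow> val) list \<Rightarrow> 'a list \<Rightarrow> 'a \<Rightarrow> ('q \<Rightarrow> val)) \<Rightarrow>
    ('q \<Rightarrow> val) list \<times> 'a list \<Rightarrow> 'q set \<Rightarrow> 'a \<Rightarrow> 'q set" where
  "adam_out G s h ob \<sigma> = (case h of (fs, ss) \<Rightarrow>
     if ob = supp (last fs) then supp (s fs ss \<sigma>) else adam_junk_obs G ob \<sigma>)"

definition adam_strategy :: "('q, 'a) mpg \<Rightarrow> (('q \<Rightarrow> val) list \<Rightarrow> 'a list \<Rightarrow> 'a \<Rightarrow> ('q \<Rightarrow> val)) \<Rightarrow>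
    'q set list \<Rightarrow> 'a list \<Rightarrow> 'a \<Rightarrow> 'q set" where
  "adam_strategy G s = adam_machine_strategy (adam_update G s) (adam_out G s) ([fI G], [])"

lemma adam_junk_obs:
  assumes "mpg_lo G" "ob \<in> obs G" "\<sigma> \<in> acts G"
  shows "adam_junk_obs G ob \<sigma> \<in> obs G \<and> adam_junk_obs G ob \<sigma> \<inter> post G \<sigma> ob \<noteq> {}"
proof -
  have "\<exists>o'. o' \<in> obs G \<and> o' \<inter> post G \<sigma> ob \<noteq> {}"
    using obs_meets_post[OF assms] by blast
  then show ?thesis
    unfolding adam_junk_obs_def by (rule someI_ex)
qed

lemma adam_memory_closed:
  assumes lo: "mpg_lo G" and W: "gamma_adam_winning G s"
    and h: "(fs, ss) \<in> adam_hists G s" "unstopped G fs ss" and ob: "ob \<in> obs G" and \<sigma>: "\<sigma> \<in> acts G"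
    and u: "adam_update G s (fs, ss) ob \<sigma> = (fs', ss')"
  shows "(fs', ss') \<in> adam_hists G s \<and> unstopped G fs' ss'"
    and "adam_out G s (fs, ss) ob \<sigma> \<in> obs G \<and> adam_out G s (fs, ss) ob \<sigma> \<inter> post G \<sigma> ob \<noteq> {}"
proof -
  show "(fs', ss') \<in> adam_hists G s \<and> unstopped G fs' ss'"
  proof (cases "ob = supp (last fs)")
    case True
    then show ?thesis
      using adam_rewind(1)[OF W adam_hists_snoc(1)[OF W h \<sigma>]] u by (simp add: adam_update_def)
  next
    case False
    then show ?thesis
      using u init_adam_hists[of G s] gam_hist_init(2)[of G] by (auto simp: adam_update_def)
  qed
  show "adam_out G s (fs, ss) ob \<sigma> \<in> obs G \<and> adam_out G s (fs, ss) ob \<sigma> \<inter> post G \<sigma> ob \<noteq> {}"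
  proof (cases "ob = supp (last fs)")
    case True
    have "supp (s fs ss \<sigma>) \<in> obs G" "supp (s fs ss \<sigma>) \<subseteq> post G \<sigma> ob"
      using fsucc_supp[OF adam_hists_snoc(2)[OF W h \<sigma>]] True by simp_all
    moreover have "supp (s fs ss \<sigma>) \<noteq> {}"
      using mpg_lo_obs[OF lo calculation(1)] by blast
    ultimately show ?thesis
      using True by (auto simp: adam_out_def)
  next
    case False
    then show ?thesis
      using adam_junk_obs[OF lo ob \<sigma>] by (simp add: adam_out_def)
  qed
qed

lemma adam_strategy_obs_finite_mem:
  assumes lo: "mpg_lo G" and W: "gamma_adam_winning G s"
  shows "adam_obs_strat G (adam_strategy G s)" "adam_finite_mem G (adam_strategy G s)"
proof -
  define M where "M = {(fs, ss) \<in> adam_hists G s. unstopped G fs ss}"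
  have "M \<subseteq> adam_hists G s"
    unfolding M_def by blast
  then have "finite M"
    using finite_adam_hists[OF lo W] finite_subset by blast
  moreover have "([fI G], []) \<in> M"
    using init_adam_hists[of G s] gam_hist_init(2)[of G] unfolding M_def by simp
  moreover have "adam_update G s h ob \<sigma> \<in> M \<and> adam_out G s h ob \<sigma> \<in> obs G \<and>
      adam_out G s h ob \<sigma> \<inter> post G \<sigma> ob \<noteq> {}"
    if hM: "h \<in> M" and ob: "ob \<in> obs G" and \<sigma>: "\<sigma> \<in> acts G" for h ob \<sigma>
  proof -
    obtain fs ss where h: "h = (fs, ss)" "(fs, ss) \<in> adam_hists G s" "unstopped G fs ss"
      using hM unfolding M_def by auto
    obtain fs' ss' where u: "adam_update G s (fs, ss) ob \<sigma> = (fs', ss')"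
      by fastforce
    show ?thesis
      using adam_memory_closed[OF lo W h(2,3) ob \<sigma> u] h(1) u unfolding M_def by simp
  qed
  ultimately show "adam_obs_strat G (adam_strategy G s)" "adam_finite_mem G (adam_strategy G s)"
    unfolding adam_strategy_def using adam_machine_strategy[of M "([fI G], [])" G] by blast+
qed

locale adam_strategy_play =
  fixes G :: "('q, 'a) mpg" and s :: "('q \<Rightarrow> val) list \<Rightarrow> 'a list \<Rightarrow> 'a \<Rightarrow> ('q \<Rightarrow> val)"
    and os :: "nat \<Rightarrow> 'q set" and as :: "nat \<Rightarrow> 'a"
  assumes lo: "mpg_lo G" and W: "gamma_adam_winning G s" and p: "is_play G os as"
    and c: "adam_cons_play (adam_strategy G s) os as"
begin

definition hist :: "nat \<Rightarrow> ('q \<Rightarrow> val) list \<times> 'a list" where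
  "hist n = foldl (\<lambda>m (ob, \<sigma>). adam_update G s m ob \<sigma>) ([fI G], [])
     (zip (map os [0..<n]) (map as [0..<n]))"

definition cur :: "nat \<Rightarrow> 'q \<Rightarrow> val" where
  "cur n = last (fst (hist n))"

definition next_val :: "nat \<Rightarrow> 'q \<Rightarrow> val" where
  "next_val n = s (fst (hist n)) (snd (hist n)) (as n)"

definition reset :: "nat \<Rightarrow> bool" where
  "reset n \<longleftrightarrow> T_A G (fst (hist n) @ [next_val n]) (snd (hist n) @ [as n])"

lemma hist_0: "hist 0 = ([fI G], [])"
  by (simp add: hist_def)

lemma hist_Suc: "hist (Suc n) = adam_update G s (hist n) (os n) (as n)"
  by (simp add: hist_def)

lemma os_Suc: "os (Suc n) = adam_out G s (hist n) (os n) (as n)"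
  using adam_cons_play_machine[OF c[unfolded adam_strategy_def]] by (simp add: hist_def)

lemma as_acts: "as n \<in> acts G"
  using p unfolding is_play_def by simp

lemma hist_invariant: "hist n \<in> adam_hists G s \<and> case_prod (unstopped G) (hist n) \<and> supp (cur n) = os n"
proof (induction n)
  case 0
  have "os 0 = {init G}"
    using p unfolding is_play_def by simp
  then show ?case
    using init_adam_hists[of G s] gam_hist_init(2)[of G]
    by (simp add: hist_0 cur_def fI_def supp_def)
next
  case (Suc n)
  obtain fs ss where h: "hist n = (fs, ss)"
    by fastforce
  then have IH: "(fs, ss) \<in> adam_hists G s" "unstopped G fs ss" "supp (last fs) = os n"
    using Suc.IH by (simp_all add: cur_def)
  obtain fs' ss' where h': "hist (Suc n) = (fs', ss')"
    by fastforce
  then have "adam_rewind (fs @ [s fs ss (as n)]) (ss @ [as n]) = (fs', ss')"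
    using hist_Suc[of n] h IH(3) by (simp add: adam_update_def)
  moreover have "os (Suc n) = supp (s fs ss (as n))"
    using os_Suc[of n] h IH(3) by (simp add: adam_out_def)
  ultimately show ?case
    using adam_rewind(1)[OF W adam_hists_snoc(1)[OF W IH(1,2) as_acts[of n]]] h'
    by (simp add: cur_def)
qed

lemma cur_Suc:
  shows fsucc_next_val: "fsucc G (cur n) (as n) (next_val n)"
    and no_reset: "\<not> reset n \<Longrightarrow>
      cur (Suc n) = next_val n \<and> length (snd (hist (Suc n))) = Suc (length (snd (hist n)))"
    and at_reset: "reset n \<Longrightarrow> (\<forall>q\<in>supp (cur (Suc n)). vle (vadd (next_val n q) 1) (cur (Suc n) q)) \<and>
      (\<exists>q\<in>supp (cur (Suc n)). cur (Suc n) q \<noteq> PInf)"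
proof -
  obtain fs ss where h: "hist n = (fs, ss)"
    by fastforce
  then have IH: "(fs, ss) \<in> adam_hists G s" "unstopped G fs ss" "supp (last fs) = os n"
    using hist_invariant[of n] by (simp_all add: cur_def)
  have nv: "next_val n = s fs ss (as n)"
    using h by (simp add: next_val_def)
  note snoc = adam_hists_snoc[OF W IH(1,2) as_acts[of n], folded nv]
  show "fsucc G (cur n) (as n) (next_val n)"
    using snoc(2) h by (simp add: cur_def)
  obtain fs' ss' where h': "hist (Suc n) = (fs', ss')"
    by fastforce
  then have "adam_rewind (fs @ [next_val n]) (ss @ [as n]) = (fs', ss')"
    using hist_Suc[of n] h IH(3) nv by (simp add: adam_update_def)
  note r = adam_rewind[OF W snoc(1) this]
  have reset: "reset n \<longleftrightarrow> T_A G (fs @ [next_val n]) (ss @ [as n])"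
    using h by (simp add: reset_def)
  show "\<not> reset n \<Longrightarrow>
      cur (Suc n) = next_val n \<and> length (snd (hist (Suc n))) = Suc (length (snd (hist n)))"
    using r(2) reset h h' by (simp add: cur_def)
  show "reset n \<Longrightarrow> (\<forall>q\<in>supp (cur (Suc n)). vle (vadd (next_val n q) 1) (cur (Suc n) q)) \<and>
      (\<exists>q\<in>supp (cur (Suc n)). cur (Suc n) q \<noteq> PInf)"
    using r(3) reset h' by (simp add: cur_def)
qed


lemma cur_Fin_pred:
  assumes "cur (Suc n) q = Fin b"
  obtains q' a where "cur n q' = Fin a" "(q', as n, q) \<in> trans G"
    "a + weight G q' (as n) q + (if reset n then 1 else 0) \<le> b"
proof -
  have q: "q \<in> supp (cur (Suc n))"
    using assms by (simp add: supp_def)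
  obtain c where c: "next_val n q = Fin c" "c + (if reset n then 1 else 0) \<le> b"
  proof (cases "reset n")
    case True
    then have "vle (vadd (next_val n q) 1) (Fin b)"
      using at_reset q assms by fastforce
    then show ?thesis
      using that True by (cases "next_val n q") auto
  next
    case False
    then show ?thesis
      using that no_reset assms by simp
  qed
  obtain q' where q': "q' \<in> supp (cur n)" "(q', as n, q) \<in> trans G"
    "vadd (cur n q') (weight G q' (as n) q) = Fin c"
    using fsucc_Fin_pred[OF lo fsucc_next_val c(1)] by blast
  then obtain a where "cur n q' = Fin a" "a + weight G q' (as n) q = c"
    by (cases "cur n q'") auto
  then show ?thesis
    using that q'(2) c(2) by simp
qed

lemma cur_in_states: "cur n q \<noteq> Bot \<Longrightarrow> q \<in> states G"
  using hist_invariant[of n] mpg_lo_obs[OF lo] p unfolding supp_def is_play_def by blast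

lemma cur_bounded: "\<exists>C. \<forall>n q k. cur n q = Fin k \<longrightarrow> k \<le> C"
proof -
  obtain B where B: "\<And>fs ss q a. (fs, ss) \<in> adam_hists G s \<Longrightarrow> q \<in> states G \<Longrightarrow>
      last fs q = Fin a \<Longrightarrow> \<bar>a\<bar> \<le> B"
    using finite_hist_values_bounded[OF finite_adam_hists[OF lo W] mpg_lo_finite_states[OF lo]]
    by blast
  have "k \<le> B" if "cur n q = Fin k" for n q k
    using B[of "fst (hist n)" "snd (hist n)" q k] hist_invariant[of n] cur_in_states[of n q] that
    by (simp add: cur_def)
  then show ?thesis
    by blast
qed

lemma hist_length_bounded: "\<exists>L. \<forall>n. length (snd (hist n)) \<le> L"
proof -
  have "finite ((\<lambda>h. length (snd h)) ` adam_hists G s)"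
    using finite_adam_hists[OF lo W] by simp
  then show ?thesis
    using hist_invariant by (meson Max_ge image_eqI)
qed

definition resets_before :: "nat \<Rightarrow> nat" where
  "resets_before n = (\<Sum>i<n. if reset i then 1 else 0)"

text \<open>Between two resets the history of $\Gamma_G$ grows by one node per step.\<close>

lemma length_le_resets:
  assumes L: "\<And>n. length (snd (hist n)) \<le> L"
  shows "n \<le> L + (L + 1) * resets_before n"
proof -
  have "n \<le> length (snd (hist n)) + (L + 1) * resets_before n" for n
  proof (induction n)
    case (Suc n)
    show ?case
    proof (cases "reset n")
      case True
      then show ?thesis
        using Suc L[of n] by (simp add: resets_before_def)
    next
      case False
      then show ?thesis
        using Suc no_reset[OF False] by (simp add: resets_before_def)
    qed
  qed simp
  then show ?thesis
    using L[of n] by (meson add_le_mono1 le_trans)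
qed

lemma resets_unbounded:
  assumes L: "\<And>n. length (snd (hist n)) \<le> L"
  shows "\<exists>n\<ge>N. reset n"
proof (rule ccontr)
  assume "\<not> ?thesis"
  then have "length (snd (hist (N + k))) = length (snd (hist N)) + k" for k
    using no_reset by (induction k) auto
  then have "length (snd (hist (N + Suc L))) > L"
    by (simp only:)
  then show False
    using L[of "N + Suc L"] by simp
qed


definition tight :: "nat \<Rightarrow> 'q \<Rightarrow> 'q \<Rightarrow> bool" where
  "tight i q' q \<longleftrightarrow> (q', as i, q) \<in> trans G \<and>
     the_Fin (cur i q') + weight G q' (as i) q + (if reset i then 1 else 0) \<le> the_Fin (cur (Suc i) q)"

definition tight_paths :: "'q list set" where
  "tight_paths = {xs. \<forall>i<length xs. (\<exists>k. cur i (xs ! i) = Fin k) \<and>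
     (Suc i < length xs \<longrightarrow> tight i (xs ! i) (xs ! Suc i))}"

lemma tight_paths_snoc:
  assumes "xs \<in> tight_paths" "length xs = Suc n" "cur (Suc n) q = Fin k" "tight n (xs ! n) q"
  shows "xs @ [q] \<in> tight_paths"
  using assms unfolding tight_paths_def
  by (auto simp: nth_append less_Suc_eq Suc_lessI)

lemma tight_paths_butlast:
  assumes "xs @ [x] \<in> tight_paths"
  shows "xs \<in> tight_paths"
proof -
  have "(\<exists>k. cur i (xs ! i) = Fin k) \<and> (Suc i < length xs \<longrightarrow> tight i (xs ! i) (xs ! Suc i))"
    if "i < length xs" for i
    using assms that spec[of _ i, OF assms[unfolded tight_paths_def mem_Collect_eq]]
    by (auto simp: nth_append)
  then show ?thesis
    unfolding tight_paths_def by blast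
qed

lemma tight_path_to:
  assumes "cur n q = Fin k"
  shows "\<exists>xs\<in>tight_paths. length xs = Suc n \<and> xs ! n = q"
  using assms
proof (induction n arbitrary: q k)
  case 0
  then show ?case
    unfolding tight_paths_def by (intro bexI[of _ "[q]"]) auto
next
  case (Suc n)
  obtain q' a where q': "cur n q' = Fin a" "(q', as n, q) \<in> trans G"
    "a + weight G q' (as n) q + (if reset n then 1 else 0) \<le> k"
    using cur_Fin_pred[OF Suc.prems] by blast
  obtain xs where xs: "xs \<in> tight_paths" "length xs = Suc n" "xs ! n = q'"
    using Suc.IH[OF q'(1)] by blast
  have "tight n q' q"
    unfolding tight_def using q' Suc.prems by simp
  then have "xs @ [q] \<in> tight_paths"
    using tight_paths_snoc[OF xs(1,2) Suc.prems] xs(3) by simp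
  then show ?case
    using xs(2) by (intro bexI[of _ "xs @ [q]"]) (auto simp: nth_append)
qed

lemma tight_paths_infinite: "infinite tight_paths"
proof
  assume fin: "finite tight_paths"
  obtain L where L: "\<And>n. length (snd (hist n)) \<le> L"
    using hist_length_bounded by blast
  obtain n where n: "n \<ge> Max (length ` tight_paths)" "reset n"
    using resets_unbounded[OF L] by blast
  obtain q where "q \<in> supp (cur (Suc n))" "cur (Suc n) q \<noteq> PInf"
    using at_reset[OF n(2)] by blast
  then obtain k where "cur (Suc n) q = Fin k"
    unfolding supp_def by (cases "cur (Suc n) q") auto
  then obtain xs where "xs \<in> tight_paths" "length xs = Suc (Suc n)"
    using tight_path_to by blast
  then have "Suc (Suc n) \<le> Max (length ` tight_paths)"
    using fin by (metis Max_ge finite_imageI image_eqI)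
  then show False
    using n(1) by simp
qed

lemma tight_paths_finite_branching: "finite {x. xs @ [x] \<in> tight_paths}"
proof -
  have "{x. xs @ [x] \<in> tight_paths} \<subseteq> states G"
  proof
    fix x assume "x \<in> {x. xs @ [x] \<in> tight_paths}"
    then obtain k where "cur (length xs) x = Fin k"
      unfolding tight_paths_def by (auto dest: spec[of _ "length xs"])
    then show "x \<in> states G"
      using cur_in_states[of "length xs" x] by simp
  qed
  then show ?thesis
    using mpg_lo_finite_states[OF lo] finite_subset by blast
qed


lemma cur_0: "cur 0 = fI G"
  by (simp add: cur_def hist_0)

lemma infinite_tight_path:
  obtains g where "\<And>n. (\<exists>k. cur n (g n) = Fin k) \<and> tight n (g n) (g (Suc n))"
proof -
  obtain g where g: "\<forall>n. map g [0..<n] \<in> tight_paths"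
    using koenig[of tight_paths] tight_paths_butlast tight_paths_finite_branching
      tight_paths_infinite by blast
  have "(\<exists>k. cur n (g n) = Fin k) \<and> tight n (g n) (g (Suc n))" for n
    using g[rule_format, of "Suc (Suc n)"] unfolding tight_paths_def
    by (auto dest: spec[of _ n] simp del: upt_Suc)
  then show ?thesis
    using that by blast
qed

lemma losing_concrete_path: "\<exists>qs. is_concrete G os as qs \<and> mp_inf G as qs < 0"
proof -
  obtain g where g_tight: "\<And>n. (\<exists>k. cur n (g n) = Fin k) \<and> tight n (g n) (g (Suc n))"
    using infinite_tight_path by blast
  have conc: "is_concrete G os as g"
    unfolding is_concrete_def
  proof
    fix i
    have "g i \<in> supp (cur i)"
      using g_tight[of i] unfolding supp_def by auto
    then show "g i \<in> os i \<and> (g i, as i, g (Suc i)) \<in> trans G"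
      using hist_invariant[of i] g_tight[of i] unfolding tight_def by auto
  qed
  define S where "S n = (\<Sum>i<n. weight G (g i) (as i) (g (Suc i)))" for n
  have sum_le: "S n + int (resets_before n) \<le> the_Fin (cur n (g n))" for n
  proof (induction n)
    case 0
    have "g 0 = init G"
      using g_tight[of 0] by (auto simp: cur_0 fI_def split: if_splits)
    then show ?case
      by (simp add: S_def resets_before_def cur_0 fI_def)
  next
    case (Suc n)
    have "S (Suc n) + int (resets_before (Suc n)) =
        S n + int (resets_before n) + weight G (g n) (as n) (g (Suc n)) + (if reset n then 1 else 0)"
      by (simp add: S_def resets_before_def)
    also have "\<dots> \<le> the_Fin (cur n (g n)) + weight G (g n) (as n) (g (Suc n)) + (if reset n then 1 else 0)"
      using Suc by simp
    also have "\<dots> \<le> the_Fin (cur (Suc n) (g (Suc n)))"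
      using g_tight[of n] unfolding tight_def by simp
    finally show ?case .
  qed
  obtain C where C: "\<And>n q k. cur n q = Fin k \<Longrightarrow> k \<le> C"
    using cur_bounded by blast
  obtain L where L: "\<And>n. length (snd (hist n)) \<le> L"
    using hist_length_bounded by blast
  have "S n + int (resets_before n) \<le> C" for n
    using sum_le[of n] C g_tight[of n] by fastforce
  then have "Liminf sequentially (\<lambda>n. ereal (real_of_int (S n) / real n)) < 0"
    using liminf_average_negative length_le_resets[OF L] by blast
  moreover have "mp_inf G as g = Liminf sequentially (\<lambda>n. ereal (real_of_int (S n) / real n))"
    unfolding mp_inf_def S_def by (simp only: of_int_sum)
  ultimately show ?thesis
    using conc by auto
qed

end

lemma adam_strategy_wins:
  assumes "mpg_lo G" "gamma_adam_winning G s" "is_play G os as"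
    "adam_cons_play (adam_strategy G s) os as"
  shows "\<not> eve_wins_play G os as"
  using adam_strategy_play.losing_concrete_path[OF adam_strategy_play.intro[OF assms]]
  unfolding eve_wins_play_def by (meson not_le)

lemma gamma_adam_winning_obs_strategy:
  assumes "mpg_lo G" "gamma_adam_winning G s"
  shows "adam_winning_obs G (adam_strategy G s)" "adam_finite_mem G (adam_strategy G s)"
  using adam_strategy_obs_finite_mem[OF assms] adam_strategy_wins[OF assms]
  unfolding adam_winning_obs_def by blast+

theorem theorem3:
  fixes G :: "('q, 'a) mpg"
  assumes "mpg_lo G"
  shows "((\<exists>s. gamma_eve_winning G s) \<longrightarrow>
            (\<exists>str. eve_winning_obs G str \<and> eve_finite_mem G str)) \<and>
         ((\<exists>s. gamma_adam_winning G s) \<longrightarrow>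
            (\<exists>str. adam_winning_obs G str \<and> adam_finite_mem G str))"
  using gamma_eve_winning_obs_strategy[OF assms] gamma_adam_winning_obs_strategy[OF assms]
  by blast

end
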